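(* Let $E\subset[0,1]$ with $[0,1]\setminus E$ finite. For each $n$ let $R_n$ be a random closed set with $R_n\subset\{0,\dots,n\}/n$ a.s., with i.i.d. copies $\{R_{n,j}\}_{j\in\mathbb N}$, and assume there is $c_0>0$ such that for every $G\in\mathcal G_0$ there is $C$ with $\max_{k/n\in G}\mathbb P(k/n\in R_n)\le Cn^{-c_0}$ for all $n$. Let $\{X_j\}$ be i.i.d., independent of all $R_{n,j}$, with $\mathbb P(|X_1|>x)=x^{-\alpha}L(x)$ where $\alpha\ge1$ and $L$ is slowly varying, and $\mathbb P(X_1>x)/\mathbb P(|X_1|>x)\to\mathsf p\in(0,1]$; let $m_n$ be increasing positive integers with $m_n\to\infty$, $m_n\le Cn^\kappa$ for some $\kappa\in(0,c_0/(1-1/\alpha))$ (any $\kappa>0$ if $\alpha=1$), and $a_n$ with $m_n\mathbb P(X_1>a_n)\to1$. Let $X_{1:m_n},\dots,X_{m_n:m_n}$ be the reordering of $X_1,\dots,X_{m_n}$ with $|X_{1:m_n}|\ge\dots\ge|X_{m_n:m_n}|$, $\sigma_n$ the permutation with $X_{\sigma_n(j)}=X_{j:m_n}$, $\hat R_{n,j}=R_{n,\sigma_n(j)}$, $\hat J_{n,k}=\{j\le m_n:k/n\in\hat R_{n,j}\}$. Let $\gamma\in(0,c_0/\alpha)$, $\delta_n=n^{-\gamma}$ and $$W_{n,\ell}(k)=\sum_{j\in\hat J_{n,k}\setminus[\ell]}X_{j:m_n}\mathbf 1\{|X_{j:m_n}|/a_n\le\delta_n\}$$ (empty sum $=0$).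 Then for all $\ell\in\mathbb N$, all $G\in\mathcal G_0$ and all $\epsilon>0$, $$\limsup_{n\to\infty}\mathbb P\Big(\frac1{a_n}\max_{k/n\in G}|W_{n,\ell}(k)|>\epsilon\Big)=0.$$
   Context: $[\ell]=\{1,\dots,\ell\}$; $\mathcal G_0=\{(a,b):[a,b]\subset E\}$; the maximum is over $k\in\{0,\dots,n\}$ with $k/n\in G$. *)

theory Defs
  imports "HOL-Probability.Probability"
begin

definition slowly_varying :: "(real \<Rightarrow> real) \<Rightarrow> bool" where
  "slowly_varying L \<longleftrightarrow> L \<in> borel_measurable borel \<and> (\<forall>\<^sub>F x in at_top. L x > 0) \<and>
     (\<forall>t>0. ((\<lambda>x. L (t * x) / L x) \<longlongrightarrow> 1) at_top)"

definition grid_trace :: "nat \<Rightarrow> real set \<Rightarrow> nat set" where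
  "grid_trace n S = {k. k \<le> n \<and> real k / real n \<in> S}"

definition hatJ :: "(nat \<Rightarrow> nat \<Rightarrow> 'a \<Rightarrow> real set) \<Rightarrow> (nat \<Rightarrow> 'a \<Rightarrow> nat \<Rightarrow> nat) \<Rightarrow> (nat \<Rightarrow> nat)
    \<Rightarrow> nat \<Rightarrow> nat \<Rightarrow> 'a \<Rightarrow> nat set" where
  "hatJ R \<sigma> m n k \<omega> = {j \<in> {1..m n}. real k / real n \<in> R n (\<sigma> n \<omega> j) \<omega>}"

definition Wsum :: "(nat \<Rightarrow> 'a \<Rightarrow> real) \<Rightarrow> (nat \<Rightarrow> nat \<Rightarrow> 'a \<Rightarrow> real set) \<Rightarrow> (nat \<Rightarrow> 'a \<Rightarrow> nat \<Rightarrow> nat)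
    \<Rightarrow> (nat \<Rightarrow> nat) \<Rightarrow> (nat \<Rightarrow> real) \<Rightarrow> real \<Rightarrow> nat \<Rightarrow> nat \<Rightarrow> nat \<Rightarrow> 'a \<Rightarrow> real" where
  "Wsum X R \<sigma> m a \<gamma> n l k \<omega> =
     (\<Sum>j \<in> hatJ R \<sigma> m n k \<omega> - {1..l}.
        X (\<sigma> n \<omega> j) \<omega> * (if \<bar>X (\<sigma> n \<omega> j) \<omega>\<bar> / a n \<le> real n powr (- \<gamma>) then 1 else 0))"

end

(*
  Write Y_i = X_i 1{|X_i| <= delta_n a_n} and S_k = sum_{i <= m_n} Y_i 1{k/n in R_{n,i}}.
  Relabelling the sample by sigma_n does not change the full sum, and each of the at most l
  summands that W_{n,l}(k) omits has modulus at most delta_n a_n, so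
  |W_{n,l}(k)| <= |S_k| + l delta_n a_n.

  For fixed k the Chernoff bound with theta = n^gamma / a_n (so |theta Y_i| <= 1) and the
  independence of the X- and R-families give
    E exp(+-theta S_k) <= exp(2 theta m_n P(k/n in R_n) E min(|X_1|, a_n)).
  Potter's bounds for the regularly varying tail yield E min(|X_1|, a) = O(a^eta) and
  a_n >= c m_n^(1/(alpha+eta)); together with m_n = O(n^kappa) and P(k/n in R_n) = O(n^-c0)
  the exponent is at most epsilon n^gamma / 4 for large n, whence
  P(|S_k| >= epsilon a_n / 2) <= 2 exp(-epsilon n^gamma / 4). A union bound over the at most
  n + 1 grid points k/n in G concludes.
*)
theory Submission
  imports Defs "HOL-Real_Asymp.Real_Asymp"
begin

section \<open>Potter bounds for regularly varying tails\<close>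

lemma doubling_induct [consumes 2, case_names base step]:
  fixes x0 x :: real
  assumes "0 < x0" "x0 \<le> x"
    and base: "\<And>x. x0 \<le> x \<Longrightarrow> x \<le> 2 * x0 \<Longrightarrow> P x"
    and step: "\<And>x. 2 * x0 \<le> x \<Longrightarrow> P (x / 2) \<Longrightarrow> P x"
  shows "P x"
proof -
  have bounded: "P y" if "x0 \<le> y" "y \<le> 2 ^ Suc j * x0" for j y
    using that
  proof (induction j arbitrary: y)
    case 0
    then show ?case
      by (intro base) auto
  next
    case (Suc j)
    show ?case
    proof (cases "y \<le> 2 * x0")
      case True
      then show ?thesis
        using Suc.prems by (intro base)
    next
      case False
      have "y / 2 \<le> 2 ^ Suc j * x0"
        using Suc.prems(2) by simp
      then have "P (y / 2)"
        using False by (intro Suc.IH) auto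
      then show ?thesis
        using False by (intro step[of y]) auto
    qed
  qed
  obtain j where "x / x0 < 2 ^ j"
    using real_arch_pow[of 2 "x / x0"] by auto
  then have "x < 2 ^ j * x0"
    using \<open>0 < x0\<close> by (simp add: divide_less_eq)
  also have "\<dots> \<le> 2 ^ Suc j * x0"
    using \<open>0 < x0\<close> by simp
  finally have "x \<le> 2 ^ Suc j * x0"
    by simp
  with bounded \<open>x0 \<le> x\<close> show ?thesis
    by blast
qed

lemma powr_neg_halve:
  fixes x y \<beta> :: real
  shows "2 powr (-\<beta>) * (x / 2 / y) powr (-\<beta>) = (x / y) powr (-\<beta>)"
proof -
  have "x / 2 / y = x / y / 2"
    by simp
  then have "(x / 2 / y) powr (-\<beta>) = (x / y) powr (-\<beta>) / 2 powr (-\<beta>)"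
    by (metis powr_divide)
  then show ?thesis
    by simp
qed

lemma antitone_doubling_upper_bound:
  fixes T :: "real \<Rightarrow> real"
  assumes "0 < x0" "0 \<le> \<beta>" "x0 \<le> x"
    and anti: "\<And>x y. x \<le> y \<Longrightarrow> T y \<le> T x" and nonneg: "\<And>x. 0 \<le> T x"
    and doubling: "\<And>x. x0 \<le> x \<Longrightarrow> T (2 * x) \<le> 2 powr (-\<beta>) * T x"
  shows "T x \<le> 2 powr \<beta> * T x0 * (x / x0) powr (-\<beta>)"
  using \<open>0 < x0\<close> \<open>x0 \<le> x\<close>
proof (induction rule: doubling_induct)
  case (base x)
  have "x / x0 \<le> 2"
    using base \<open>0 < x0\<close> by (simp add: divide_le_eq mult.commute)
  have "1 = 2 powr \<beta> * 2 powr (-\<beta>)"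
    by (simp add: powr_minus)
  also have "\<dots> \<le> 2 powr \<beta> * (x / x0) powr (-\<beta>)"
    using base \<open>x / x0 \<le> 2\<close> \<open>0 < x0\<close> \<open>0 \<le> \<beta>\<close> by (intro mult_left_mono powr_mono2') auto
  finally have "T x0 * 1 \<le> T x0 * (2 powr \<beta> * (x / x0) powr (-\<beta>))"
    using nonneg by (rule mult_left_mono)
  then have "T x0 \<le> 2 powr \<beta> * T x0 * (x / x0) powr (-\<beta>)"
    by (simp add: mult_ac)
  then show ?case
    using anti[of x0 x] base by linarith
next
  case (step x)
  have "T x \<le> 2 powr (-\<beta>) * T (x / 2)"
    using doubling[of "x / 2"] step by simp
  also have "\<dots> \<le> 2 powr (-\<beta>) * (2 powr \<beta> * T x0 * (x / 2 / x0) powr (-\<beta>))"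
    using step by (intro mult_left_mono) auto
  also have "\<dots> = 2 powr \<beta> * T x0 * (x / x0) powr (-\<beta>)"
    by (metis powr_neg_halve mult.left_commute)
  finally show ?case .
qed

lemma antitone_doubling_lower_bound:
  fixes T :: "real \<Rightarrow> real"
  assumes "0 < x0" "0 \<le> \<beta>" "x0 \<le> x"
    and anti: "\<And>x y. x \<le> y \<Longrightarrow> T y \<le> T x" and nonneg: "\<And>x. 0 \<le> T x"
    and doubling: "\<And>x. x0 \<le> x \<Longrightarrow> 2 powr (-\<beta>) * T x \<le> T (2 * x)"
  shows "T (2 * x0) * (x / x0) powr (-\<beta>) \<le> T x"
  using \<open>0 < x0\<close> \<open>x0 \<le> x\<close>
proof (induction rule: doubling_induct)
  case (base x)
  have "1 \<le> x / x0"
    using base \<open>0 < x0\<close> by simp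
  then have "(x / x0) powr (-\<beta>) \<le> 1 powr (-\<beta>)"
    using \<open>0 \<le> \<beta>\<close> by (intro powr_mono2') auto
  then have "(x / x0) powr (-\<beta>) \<le> 1"
    by simp
  then have "T (2 * x0) * (x / x0) powr (-\<beta>) \<le> T (2 * x0) * 1"
    using nonneg by (rule mult_left_mono)
  then show ?case
    using anti[of x "2 * x0"] base by linarith
next
  case (step x)
  have "T (2 * x0) * (x / x0) powr (-\<beta>) = 2 powr (-\<beta>) * (T (2 * x0) * (x / 2 / x0) powr (-\<beta>))"
    by (metis powr_neg_halve mult.left_commute)
  also have "\<dots> \<le> 2 powr (-\<beta>) * T (x / 2)"
    using step by (intro mult_left_mono) auto
  also have "\<dots> \<le> T x"
    using doubling[of "x / 2"] step by simp
  finally show ?case .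
qed

lemma regularly_varying_doubling_ratio:
  fixes T L :: "real \<Rightarrow> real"
  assumes L: "slowly_varying L" and T: "\<And>x. 0 < x \<Longrightarrow> T x = x powr (-\<alpha>) * L x"
  shows "((\<lambda>x. T (2 * x) / T x) \<longlongrightarrow> 2 powr (-\<alpha>)) at_top"
proof -
  have "((\<lambda>x. L (2 * x) / L x) \<longlongrightarrow> 1) at_top"
    using L unfolding slowly_varying_def by auto
  then have "((\<lambda>x. 2 powr (-\<alpha>) * (L (2 * x) / L x)) \<longlongrightarrow> 2 powr (-\<alpha>) * 1) at_top"
    by (intro tendsto_mult tendsto_const)
  moreover have "eventually (\<lambda>x. 2 powr (-\<alpha>) * (L (2 * x) / L x) = T (2 * x) / T x) at_top"
    using eventually_gt_at_top[of 0]
  proof eventually_elim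
    case (elim x)
    have "T (2 * x) / T x = ((2 * x) powr (-\<alpha>) / x powr (-\<alpha>)) * (L (2 * x) / L x)"
      using elim by (simp add: T)
    also have "(2 * x) powr (-\<alpha>) / x powr (-\<alpha>) = 2 powr (-\<alpha>)"
      using elim by (simp add: powr_mult)
    finally show ?case
      by simp
  qed
  ultimately show ?thesis
    by (simp add: tendsto_cong)
qed

lemma powr_neg_quotient:
  fixes x y s :: real
  shows "(x / y) powr (-s) = y powr s * x powr (-s)"
proof -
  have "(x / y) powr (-s) = x powr (-s) / y powr (-s)"
    by (rule powr_divide)
  also have "\<dots> = y powr s * x powr (-s)"
    by (simp add: powr_minus divide_inverse)
  finally show ?thesis .
qed

lemma doubling_ratio_bounds:
  fixes T :: "real \<Rightarrow> real"
  assumes nonneg: "\<And>x. 0 \<le> T x"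
    and ratio: "((\<lambda>x. T (2 * x) / T x) \<longlongrightarrow> 2 powr (-\<alpha>)) at_top" and "0 < \<eta>"
  obtains x0 where "0 < x0" "\<And>x. x0 \<le> x \<Longrightarrow> 0 < T x"
    "\<And>x. x0 \<le> x \<Longrightarrow> 2 powr (-(\<alpha> + \<eta>)) * T x \<le> T (2 * x)"
    "\<And>x. x0 \<le> x \<Longrightarrow> T (2 * x) \<le> 2 powr (-(\<alpha> - \<eta>)) * T x"
proof -
  have lt: "2 powr (-(\<alpha> + \<eta>)) < 2 powr (-\<alpha>)" "2 powr (-\<alpha>) < 2 powr (-(\<alpha> - \<eta>))"
    using \<open>0 < \<eta>\<close> by auto
  have "eventually (\<lambda>x. 0 < x \<and> 2 powr (-(\<alpha> + \<eta>)) < T (2 * x) / T x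
      \<and> T (2 * x) / T x < 2 powr (-(\<alpha> - \<eta>))) at_top"
    by (intro eventually_conj eventually_gt_at_top order_tendstoD(1)[OF ratio lt(1)] order_tendstoD(2)[OF ratio lt(2)])
  then obtain x0 where x0: "\<And>x. x0 \<le> x \<Longrightarrow> 0 < x \<and> 2 powr (-(\<alpha> + \<eta>)) < T (2 * x) / T x
      \<and> T (2 * x) / T x < 2 powr (-(\<alpha> - \<eta>))"
    by (auto simp: eventually_at_top_linorder)
  show ?thesis
  proof (rule that[of x0])
    show "0 < x0"
      using x0[of x0] by simp
    fix x assume "x0 \<le> x"
    then have r: "2 powr (-(\<alpha> + \<eta>)) < T (2 * x) / T x" "T (2 * x) / T x < 2 powr (-(\<alpha> - \<eta>))"
      using x0 by auto
    then show pos: "0 < T x"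
      using nonneg[of x] nonneg[of "2 * x"] by (cases "T x = 0") auto
    with r show "2 powr (-(\<alpha> + \<eta>)) * T x \<le> T (2 * x)" "T (2 * x) \<le> 2 powr (-(\<alpha> - \<eta>)) * T x"
      by (simp_all add: field_simps)
  qed
qed

lemma Potter_bounds:
  fixes T :: "real \<Rightarrow> real"
  assumes anti: "\<And>x y. x \<le> y \<Longrightarrow> T y \<le> T x" and nonneg: "\<And>x. 0 \<le> T x"
    and ratio: "((\<lambda>x. T (2 * x) / T x) \<longlongrightarrow> 2 powr (-\<alpha>)) at_top"
    and \<eta>: "0 < \<eta>" "\<eta> \<le> \<alpha>"
  obtains x0 b B where "0 < x0" "0 < b"
    "\<And>x. x0 \<le> x \<Longrightarrow> b * x powr (-(\<alpha> + \<eta>)) \<le> T x"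
    "\<And>x. x0 \<le> x \<Longrightarrow> T x \<le> B * x powr (-(\<alpha> - \<eta>))"
proof -
  obtain x0 where x0: "0 < x0" and pos: "\<And>x. x0 \<le> x \<Longrightarrow> 0 < T x"
    and lower: "\<And>x. x0 \<le> x \<Longrightarrow> 2 powr (-(\<alpha> + \<eta>)) * T x \<le> T (2 * x)"
    and upper: "\<And>x. x0 \<le> x \<Longrightarrow> T (2 * x) \<le> 2 powr (-(\<alpha> - \<eta>)) * T x"
    using doubling_ratio_bounds[OF nonneg ratio \<eta>(1)] by blast
  show ?thesis
  proof (rule that[of x0 "T (2 * x0) * x0 powr (\<alpha> + \<eta>)" "2 powr (\<alpha> - \<eta>) * T x0 * x0 powr (\<alpha> - \<eta>)"])
    show "0 < x0"
      by (fact x0)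
    show "0 < T (2 * x0) * x0 powr (\<alpha> + \<eta>)"
      using pos[of "2 * x0"] x0 by simp
  next
    fix x assume "x0 \<le> x"
    have "T (2 * x0) * (x / x0) powr (-(\<alpha> + \<eta>)) \<le> T x"
      using x0 \<eta> \<open>x0 \<le> x\<close> anti nonneg lower by (intro antitone_doubling_lower_bound) auto
    then show "T (2 * x0) * x0 powr (\<alpha> + \<eta>) * x powr (-(\<alpha> + \<eta>)) \<le> T x"
      unfolding powr_neg_quotient by (simp only: mult.assoc)
  next
    fix x assume "x0 \<le> x"
    have "T x \<le> 2 powr (\<alpha> - \<eta>) * T x0 * (x / x0) powr (-(\<alpha> - \<eta>))"
      using x0 \<eta> \<open>x0 \<le> x\<close> anti nonneg upper by (intro antitone_doubling_upper_bound) auto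
    then show "T x \<le> 2 powr (\<alpha> - \<eta>) * T x0 * x0 powr (\<alpha> - \<eta>) * x powr (-(\<alpha> - \<eta>))"
      unfolding powr_neg_quotient by (simp only: mult.assoc)
  qed
qed

section \<open>Truncated first moments and the norming constants\<close>

lemma exists_power_of_two_between:
  fixes a :: real
  assumes "1 \<le> a"
  obtains J :: nat where "a \<le> 2 ^ J" "2 ^ J \<le> 2 * a"
proof
  define J where "J = nat \<lceil>log 2 a\<rceil>"
  have "real J = of_int \<lceil>log 2 a\<rceil>"
    using assms by (simp add: J_def)
  then have pow: "(2::real) ^ J = 2 powr of_int \<lceil>log 2 a\<rceil>"
    by (metis powr_realpow zero_less_numeral)
  have "a = 2 powr log 2 a"
    using assms by simp
  also have "\<dots> \<le> 2 powr of_int \<lceil>log 2 a\<rceil>"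
    by (intro powr_mono) auto
  finally show "a \<le> 2 ^ J"
    by (simp add: pow)
  have "2 powr of_int \<lceil>log 2 a\<rceil> \<le> 2 powr (log 2 a + 1)"
    by (intro powr_mono) linarith+
  also have "\<dots> = 2 * a"
    using assms by (simp add: powr_add)
  finally show "2 ^ J \<le> 2 * a"
    by (simp add: pow)
qed

lemma min_le_dyadic_sum:
  fixes x :: real
  shows "min x (2 ^ J) \<le> 1 + (\<Sum>j<J. 2 ^ j * (if 2 ^ j < x then 1 else 0))"
proof (induction J)
  case 0
  then show ?case by simp
next
  case (Suc J)
  have "min x (2 ^ Suc J) \<le> min x (2 ^ J) + 2 ^ J * (if 2 ^ J < x then 1 else 0)"
    by (auto simp: min_def)
  with Suc show ?case
    by simp
qed

lemma (in prob_space) expectation_min_abs_le_dyadic_sum: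
  assumes Z[measurable]: "Z \<in> borel_measurable M"
  shows "expectation (\<lambda>\<omega>. min \<bar>Z \<omega>\<bar> (2 ^ J))
    \<le> 1 + (\<Sum>j<J. 2 ^ j * prob {\<omega> \<in> space M. 2 ^ j < \<bar>Z \<omega>\<bar>})"
proof -
  define A where "A j = {\<omega> \<in> space M. 2 ^ j < \<bar>Z \<omega>\<bar>}" for j :: nat
  have A[measurable]: "A j \<in> events" for j
    unfolding A_def by measurable
  have int: "integrable M (indicat_real (A j))" for j
    by (intro integrable_real_indicator) (auto simp: less_top[symmetric])
  have "expectation (\<lambda>\<omega>. min \<bar>Z \<omega>\<bar> (2 ^ J)) \<le> expectation (\<lambda>\<omega>. 1 + (\<Sum>j<J. 2 ^ j * indicator (A j) \<omega>))"
  proof (rule integral_mono)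
    show "integrable M (\<lambda>\<omega>. min \<bar>Z \<omega>\<bar> (2 ^ J))"
      by (rule integrable_const_bound[where B="2 ^ J"]) auto
    show "integrable M (\<lambda>\<omega>. 1 + (\<Sum>j<J. (2::real) ^ j * indicator (A j) \<omega>))"
      by (intro Bochner_Integration.integrable_add integrable_const Bochner_Integration.integrable_sum integrable_mult_right int)
    fix \<omega> assume "\<omega> \<in> space M"
    then have "(\<Sum>j<J. 2 ^ j * indicator (A j) \<omega>) = (\<Sum>j<J. 2 ^ j * (if 2 ^ j < \<bar>Z \<omega>\<bar> then 1 else (0::real)))"
      by (intro sum.cong) (auto simp: A_def)
    then show "min \<bar>Z \<omega>\<bar> (2 ^ J) \<le> 1 + (\<Sum>j<J. 2 ^ j * indicator (A j) \<omega>)"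
      using min_le_dyadic_sum[of "\<bar>Z \<omega>\<bar>" J] by simp
  qed
  also have "\<dots> = expectation (\<lambda>\<omega>. 1) + expectation (\<lambda>\<omega>. \<Sum>j<J. 2 ^ j * indicator (A j) \<omega>)"
    by (intro Bochner_Integration.integral_add integrable_const Bochner_Integration.integrable_sum integrable_mult_right int)
  also have "\<dots> = 1 + (\<Sum>j<J. expectation (\<lambda>\<omega>. 2 ^ j * indicator (A j) \<omega>))"
    by (subst Bochner_Integration.integral_sum) (auto intro: int simp: prob_space)
  also have "\<dots> = 1 + (\<Sum>j<J. 2 ^ j * prob (A j))"
    by simp
  finally show ?thesis
    by (simp add: A_def)
qed

lemma dyadic_tail_term_le:
  fixes T :: "real \<Rightarrow> real"
  assumes T01: "\<And>x. 0 \<le> T x" "\<And>x. T x \<le> 1" and "1 \<le> x0" "0 < \<eta>" "1 - \<eta> \<le> \<beta>"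
    and tail: "\<And>x. x0 \<le> x \<Longrightarrow> T x \<le> B * x powr (-\<beta>)"
  shows "2 ^ j * T (2 ^ j) \<le> max B x0 * (2 powr \<eta>) ^ j"
proof -
  have pow: "(2 powr \<eta>) ^ j = (2 ^ j) powr \<eta>"
    by (simp add: powr_realpow[symmetric] powr_powr mult.commute)
  have "1 \<le> (2::real) ^ j"
    by simp
  then have one: "1 \<le> (2 powr \<eta>) ^ j"
    using \<open>0 < \<eta>\<close> by (simp add: pow ge_one_powr_ge_zero)
  show ?thesis
  proof (cases "x0 \<le> 2 ^ j")
    case True
    have "B * x0 powr (-\<beta>) \<ge> 0"
      using tail[of x0] T01(1)[of x0] by linarith
    then have "0 \<le> B"
      using \<open>1 \<le> x0\<close> by (auto simp: zero_le_mult_iff)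
    have "2 ^ j * T (2 ^ j) \<le> 2 ^ j * (B * (2 ^ j) powr (-\<beta>))"
      using tail True by (intro mult_left_mono) auto
    also have "\<dots> = B * (2 ^ j) powr (1 - \<beta>)"
      by (simp add: powr_diff powr_minus divide_inverse)
    also have "\<dots> \<le> B * (2 ^ j) powr \<eta>"
      using \<open>0 \<le> B\<close> \<open>1 - \<eta> \<le> \<beta>\<close> by (intro mult_left_mono powr_mono) auto
    also have "\<dots> \<le> max B x0 * (2 powr \<eta>) ^ j"
      by (simp add: pow mult_right_mono)
    finally show ?thesis .
  next
    case False
    have "2 ^ j * T (2 ^ j) \<le> 2 ^ j * 1"
      using T01 by (intro mult_left_mono) auto
    also have "\<dots> \<le> x0 * 1"
      using False by simp
    also have "\<dots> \<le> max B x0 * (2 powr \<eta>) ^ j"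
      using one \<open>1 \<le> x0\<close> by (intro mult_mono) auto
    finally show ?thesis .
  qed
qed

lemma (in prob_space) expectation_min_abs_le_powr:
  assumes Z[measurable]: "Z \<in> borel_measurable M" and "1 \<le> x0" "0 < \<eta>" "1 - \<eta> \<le> \<beta>"
    and tail: "\<And>x. x0 \<le> x \<Longrightarrow> prob {\<omega> \<in> space M. x < \<bar>Z \<omega>\<bar>} \<le> B * x powr (-\<beta>)"
  obtains K where "\<And>a. 1 \<le> a \<Longrightarrow> expectation (\<lambda>\<omega>. min \<bar>Z \<omega>\<bar> a) \<le> K * a powr \<eta>"
proof
  define q where "q = (2::real) powr \<eta>"
  have q: "1 < q"
    using \<open>0 < \<eta>\<close> by (simp add: q_def)
  define B' where "B' = max B x0"
  have "0 \<le> B'"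
    using \<open>1 \<le> x0\<close> by (simp add: B'_def)
  fix a :: real assume "1 \<le> a"
  then obtain J where J: "a \<le> 2 ^ J" "2 ^ J \<le> 2 * a"
    by (rule exists_power_of_two_between)
  have "expectation (\<lambda>\<omega>. min \<bar>Z \<omega>\<bar> a) \<le> expectation (\<lambda>\<omega>. min \<bar>Z \<omega>\<bar> (2 ^ J))"
    using J by (intro integral_mono integrable_const_bound[where B=a] integrable_const_bound[where B="2 ^ J"])
      (auto simp: \<open>1 \<le> a\<close>)
  also have "\<dots> \<le> 1 + (\<Sum>j<J. 2 ^ j * prob {\<omega> \<in> space M. 2 ^ j < \<bar>Z \<omega>\<bar>})"
    by (rule expectation_min_abs_le_dyadic_sum[OF Z])
  also have "\<dots> \<le> 1 + (\<Sum>j<J. B' * q ^ j)"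
    unfolding B'_def q_def using assms
    by (intro add_left_mono sum_mono dyadic_tail_term_le[where T="\<lambda>x. prob {\<omega> \<in> space M. x < \<bar>Z \<omega>\<bar>}"]) auto
  also have "(\<Sum>j<J. B' * q ^ j) = B' * ((q ^ J - 1) / (q - 1))"
    using q by (simp add: sum_distrib_left[symmetric] sum_gp_strict field_simps)
  also have "\<dots> \<le> B' * (q ^ J / (q - 1))"
    using q \<open>0 \<le> B'\<close> by (intro mult_left_mono divide_right_mono) auto
  also have "q ^ J = (2 ^ J) powr \<eta>"
    by (simp add: q_def powr_realpow[symmetric] powr_powr mult.commute)
  also have "\<dots> \<le> (2 * a) powr \<eta>"
    using J \<open>0 < \<eta>\<close> by (intro powr_mono2) auto
  also have "(2 * a) powr \<eta> = q * a powr \<eta>"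
    using \<open>1 \<le> a\<close> by (simp add: q_def powr_mult)
  finally have "expectation (\<lambda>\<omega>. min \<bar>Z \<omega>\<bar> a) \<le> 1 + B' * q / (q - 1) * a powr \<eta>"
    using q \<open>0 \<le> B'\<close> by (simp add: mult_left_mono divide_right_mono mult.assoc)
  moreover have "1 \<le> a powr \<eta>"
    using \<open>1 \<le> a\<close> \<open>0 < \<eta>\<close> by (simp add: ge_one_powr_ge_zero)
  ultimately show "expectation (\<lambda>\<omega>. min \<bar>Z \<omega>\<bar> a) \<le> (1 + B' * q / (q - 1)) * a powr \<eta>"
    by (simp add: algebra_simps)
qed

text \<open>The Potter slack \<eta> enters through
  m n * E min(|X 1|, a n) / a n = O(m n powr (1 - (1 - \<eta>) / (\<alpha> + \<eta>))), and the condition below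
  makes this o(n powr c0) when m n = O(n powr \<kappa>).\<close>

lemma exists_exponent_slack:
  fixes \<alpha> \<kappa> c0 :: real
  assumes "1 \<le> \<alpha>" "0 < \<kappa>" "0 < c0" "1 < \<alpha> \<Longrightarrow> \<kappa> < c0 / (1 - 1 / \<alpha>)"
  obtains \<eta> where "0 < \<eta>" "\<eta> < 1" "\<kappa> * (1 - (1 - \<eta>) / (\<alpha> + \<eta>)) < c0"
proof -
  have "\<kappa> * (1 - 1 / \<alpha>) < c0"
  proof (cases "1 < \<alpha>")
    case True
    then have "0 < 1 - 1 / \<alpha>"
      by simp
    with assms(4)[OF True] show ?thesis
      by (simp add: field_simps)
  next
    case False
    with assms show ?thesis
      by simp
  qed
  moreover have "((\<lambda>\<eta>. \<kappa> * (1 - (1 - \<eta>) / (\<alpha> + \<eta>))) \<longlongrightarrow> \<kappa> * (1 - (1 - 0) / (\<alpha> + 0))) (at_right 0)"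
    using assms(1) by (intro tendsto_intros) auto
  ultimately have "eventually (\<lambda>\<eta>. \<kappa> * (1 - (1 - \<eta>) / (\<alpha> + \<eta>)) < c0) (at_right 0)"
    using order_tendstoD(2) by fastforce
  moreover have "eventually (\<lambda>\<eta>. 0 < \<eta> \<and> \<eta> < (1::real)) (at_right 0)"
    by (rule eventually_at_rightI[where b=1]) auto
  ultimately have "eventually (\<lambda>\<eta>. 0 < \<eta> \<and> \<eta> < 1 \<and> \<kappa> * (1 - (1 - \<eta>) / (\<alpha> + \<eta>)) < c0) (at_right (0::real))"
    by eventually_elim auto
  then show ?thesis
    using that eventually_happens[of _ "at_right (0::real)"] by auto
qed

lemma norming_sequence_tendsto_infinity:
  fixes P :: "real \<Rightarrow> real" and m :: "nat \<Rightarrow> nat" and a :: "nat \<Rightarrow> real"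
  assumes anti: "\<And>x y. x \<le> y \<Longrightarrow> P y \<le> P x" and pos: "eventually (\<lambda>x. 0 < P x) at_top"
    and m: "filterlim m at_top sequentially"
    and lim: "(\<lambda>n. real (m n) * P (a n)) \<longlonglongrightarrow> 1"
  shows "filterlim a at_top sequentially"
  unfolding filterlim_at_top
proof
  fix z :: real
  have m_real: "filterlim (\<lambda>n. real (m n)) at_top sequentially"
    by (rule filterlim_compose[OF filterlim_real_sequentially m])
  have "(\<lambda>n. real (m n) * P (a n) * inverse (real (m n))) \<longlonglongrightarrow> 1 * 0"
    by (intro tendsto_mult lim tendsto_inverse_0_at_top m_real)
  moreover have "eventually (\<lambda>n. real (m n) * P (a n) * inverse (real (m n)) = P (a n)) sequentially"
    using filterlim_at_top_dense[THEN iffD1, OF m_real, rule_format, of 0] by eventually_elim auto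
  ultimately have P_lim: "(\<lambda>n. P (a n)) \<longlonglongrightarrow> 0"
    by (simp add: tendsto_cong)
  obtain x where "z \<le> x" "0 < P x"
    using eventually_happens'[OF _ eventually_conj[OF eventually_ge_at_top[of z] pos]] by auto
  then have "eventually (\<lambda>n. P (a n) < P x) sequentially"
    using order_tendstoD(2)[OF P_lim] by auto
  then show "eventually (\<lambda>n. z \<le> a n) sequentially"
  proof eventually_elim
    case (elim n)
    then have "x < a n"
      using anti[of "a n" x] by fastforce
    with \<open>z \<le> x\<close> show ?case
      by simp
  qed
qed

lemma norming_sequence_lower_bound:
  fixes T P :: "real \<Rightarrow> real" and m :: "nat \<Rightarrow> nat" and a :: "nat \<Rightarrow> real"
  assumes "0 < s" "0 < b" "0 < p"
    and lower: "\<And>x. x0 \<le> x \<Longrightarrow> b * x powr (-s) \<le> T x"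
    and balance: "((\<lambda>x. P x / T x) \<longlongrightarrow> p) at_top"
    and a: "filterlim a at_top sequentially"
    and lim: "(\<lambda>n. real (m n) * P (a n)) \<longlonglongrightarrow> 1"
  shows "eventually (\<lambda>n. (b * p / 4 * real (m n)) powr (1 / s) \<le> a n) sequentially"
proof -
  have "eventually (\<lambda>n. max x0 1 \<le> a n) sequentially"
    using a unfolding filterlim_at_top by blast
  moreover have "((\<lambda>n. P (a n) / T (a n)) \<longlongrightarrow> p) sequentially"
    by (rule filterlim_compose[OF balance a])
  then have "eventually (\<lambda>n. p / 2 < P (a n) / T (a n)) sequentially"
    using \<open>0 < p\<close> by (intro order_tendstoD(1)) auto
  moreover have "eventually (\<lambda>n. real (m n) * P (a n) < 2) sequentially"
    using order_tendstoD(2)[OF lim] by simp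
  ultimately show ?thesis
  proof eventually_elim
    case (elim n)
    define x where "x = a n"
    have x: "x0 \<le> x" "0 < x"
      using elim(1) by (auto simp: x_def)
    have "0 < b * x powr (-s)"
      using \<open>0 < b\<close> x by simp
    also have "\<dots> \<le> T x"
      using lower x by simp
    finally have "0 < T x" .
    with elim(2) have "p / 2 * T x < P x"
      by (simp add: x_def field_simps)
    moreover have "p / 2 * (b * x powr (-s)) \<le> p / 2 * T x"
      using lower[OF x(1)] \<open>0 < p\<close> by (intro mult_left_mono) auto
    ultimately have "real (m n) * (p / 2 * (b * x powr (-s))) \<le> real (m n) * P x"
      by (intro mult_left_mono) auto
    with elim(3) have "b * p / 4 * real (m n) * x powr (-s) < 1"
      by (simp add: x_def field_simps)
    then have "b * p / 4 * real (m n) < x powr s"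
      using x by (simp add: powr_minus field_simps)
    then have "(b * p / 4 * real (m n)) powr (1 / s) \<le> (x powr s) powr (1 / s)"
      using \<open>0 < b\<close> \<open>0 < p\<close> \<open>0 < s\<close> by (intro powr_mono2) auto
    also have "\<dots> = x"
      using x \<open>0 < s\<close> by (simp add: powr_powr)
    finally show ?case
      by (simp add: x_def)
  qed
qed

lemma truncated_mean_ratio_le_powr:
  fixes \<mu> :: "real \<Rightarrow> real" and k x :: real and n :: nat
  assumes x: "1 \<le> x" "(c * k) powr (1 / s) \<le> x" and k: "1 \<le> k" "k \<le> C * real n powr \<kappa>"
    and \<mu>: "\<mu> x \<le> K * x powr \<eta>" "0 \<le> K"
    and "0 < s" "0 < c" "0 < C" "\<eta> \<le> 1"
  defines "e \<equiv> 1 - (1 - \<eta>) / s"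
  assumes "0 \<le> e"
  shows "k * real n powr (-c0) * \<mu> x / x \<le> K * c powr ((\<eta> - 1) / s) * C powr e * real n powr (\<kappa> * e - c0)"
proof -
  have "x powr (\<eta> - 1) \<le> ((c * k) powr (1 / s)) powr (\<eta> - 1)"
    using x k \<open>0 < c\<close> \<open>\<eta> \<le> 1\<close> by (intro powr_mono2') auto
  also have "\<dots> = c powr ((\<eta> - 1) / s) * k powr ((\<eta> - 1) / s)"
    using k \<open>0 < c\<close> by (simp add: powr_powr powr_mult)
  finally have x_pow: "x powr (\<eta> - 1) \<le> c powr ((\<eta> - 1) / s) * k powr ((\<eta> - 1) / s)" .
  have "1 + (\<eta> - 1) / s = e"
    using \<open>0 < s\<close> by (simp add: e_def field_simps)
  then have k_e: "k * k powr ((\<eta> - 1) / s) = k powr e"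
    using k powr_mult_base[of k "(\<eta> - 1) / s"] by simp
  have "k powr e \<le> (C * real n powr \<kappa>) powr e"
    using k \<open>0 \<le> e\<close> by (intro powr_mono2) auto
  also have "\<dots> = C powr e * real n powr (\<kappa> * e)"
    using \<open>0 < C\<close> by (simp add: powr_mult powr_powr)
  finally have k_pow: "k powr e \<le> C powr e * real n powr (\<kappa> * e)" .
  have "k * real n powr (-c0) * \<mu> x / x \<le> k * real n powr (-c0) * (K * x powr \<eta>) / x"
    using \<mu>(1) x k by (intro divide_right_mono mult_left_mono) auto
  also have "\<dots> = K * real n powr (-c0) * k * x powr (\<eta> - 1)"
    using x by (simp add: powr_diff)
  also have "\<dots> \<le> K * real n powr (-c0) * k * (c powr ((\<eta> - 1) / s) * k powr ((\<eta> - 1) / s))"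
    using x_pow k \<open>0 \<le> K\<close> by (intro mult_left_mono) auto
  also have "\<dots> = K * real n powr (-c0) * c powr ((\<eta> - 1) / s) * k powr e"
    by (simp flip: k_e add: ac_simps)
  also have "\<dots> \<le> K * real n powr (-c0) * c powr ((\<eta> - 1) / s) * (C powr e * real n powr (\<kappa> * e))"
    using k_pow \<open>0 \<le> K\<close> by (intro mult_left_mono) auto
  also have "\<dots> = K * c powr ((\<eta> - 1) / s) * C powr e * real n powr (\<kappa> * e - c0)"
    by (simp add: powr_diff powr_minus divide_inverse ac_simps)
  finally show ?thesis .
qed

lemma truncated_mean_ratio_eventually_le:
  fixes \<mu> :: "real \<Rightarrow> real" and m :: "nat \<Rightarrow> nat" and a :: "nat \<Rightarrow> real"
  assumes \<mu>: "\<And>x. 1 \<le> x \<Longrightarrow> 0 \<le> \<mu> x" "\<And>x. 1 \<le> x \<Longrightarrow> \<mu> x \<le> K * x powr \<eta>"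
    and "0 < s" "0 < c" "\<eta> \<le> 1"
    and e: "0 \<le> 1 - (1 - \<eta>) / s" "\<kappa> * (1 - (1 - \<eta>) / s) < c0"
    and a_inf: "filterlim a at_top sequentially"
    and a_lower: "eventually (\<lambda>n. (c * real (m n)) powr (1 / s) \<le> a n) sequentially"
    and m_pos: "\<And>n. 0 < m n"
    and m_growth: "\<And>n. 1 \<le> n \<Longrightarrow> real (m n) \<le> C * real n powr \<kappa>"
    and "0 < \<epsilon>"
  shows "eventually (\<lambda>n. 1 \<le> a n \<and> real (m n) * real n powr (-c0) * \<mu> (a n) / a n \<le> \<epsilon>) sequentially"
proof -
  define D where "D = K * c powr ((\<eta> - 1) / s) * C powr (1 - (1 - \<eta>) / s)"
  have "0 \<le> K"
    using \<mu>(1)[of 1] \<mu>(2)[of 1] by simp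
  have "0 < C"
    using m_growth[of 1] m_pos[of 1] by simp
  have "(\<lambda>n. D * real n powr (\<kappa> * (1 - (1 - \<eta>) / s) - c0)) \<longlonglongrightarrow> D * 0"
    using e by (intro tendsto_mult tendsto_const tendsto_neg_powr filterlim_real_sequentially) auto
  then have "eventually (\<lambda>n. D * real n powr (\<kappa> * (1 - (1 - \<eta>) / s) - c0) < \<epsilon>) sequentially"
    using \<open>0 < \<epsilon>\<close> by (intro order_tendstoD(2)) auto
  moreover have "eventually (\<lambda>n. 1 \<le> a n) sequentially"
    using a_inf unfolding filterlim_at_top by blast
  ultimately show ?thesis
    using a_lower eventually_ge_at_top[of 1]
  proof eventually_elim
    case (elim n)
    have "real (m n) * real n powr (-c0) * \<mu> (a n) / a n \<le> D * real n powr (\<kappa> * (1 - (1 - \<eta>) / s) - c0)"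
      unfolding D_def using elim m_pos[of n] m_growth[of n] \<mu>[of "a n"] \<open>0 \<le> K\<close> \<open>0 < C\<close> assms(3-5) e(1)
      by (intro truncated_mean_ratio_le_powr) auto
    with elim show ?case
      by simp
  qed
qed

lemma (in prob_space) truncated_mean_over_norming_eventually_le:
  fixes Z :: "'a \<Rightarrow> real" and m :: "nat \<Rightarrow> nat" and a :: "nat \<Rightarrow> real"
  assumes Z[measurable]: "Z \<in> borel_measurable M"
    and tail: "slowly_varying L" "\<And>x. 0 < x \<Longrightarrow> prob {\<omega> \<in> space M. \<bar>Z \<omega>\<bar> > x} = x powr (-\<alpha>) * L x"
    and balance: "((\<lambda>x. prob {\<omega> \<in> space M. Z \<omega> > x} / prob {\<omega> \<in> space M. \<bar>Z \<omega>\<bar> > x}) \<longlongrightarrow> p) at_top"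
    and p: "0 < p" and \<alpha>: "1 \<le> \<alpha>"
    and \<kappa>: "0 < \<kappa>" "1 < \<alpha> \<Longrightarrow> \<kappa> < c0 / (1 - 1 / \<alpha>)" and c0: "0 < c0"
    and m_pos: "\<And>n. 0 < m n" and m_inf: "filterlim m at_top sequentially"
    and m_growth: "\<And>n. 1 \<le> n \<Longrightarrow> real (m n) \<le> C * real n powr \<kappa>"
    and a_n: "(\<lambda>n. real (m n) * prob {\<omega> \<in> space M. Z \<omega> > a n}) \<longlonglongrightarrow> 1"
    and \<epsilon>: "0 < \<epsilon>"
  shows "eventually (\<lambda>n. 1 \<le> a n \<and>
    real (m n) * real n powr (-c0) * expectation (\<lambda>\<omega>. min \<bar>Z \<omega>\<bar> (a n)) / a n \<le> \<epsilon>) sequentially"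
proof -
  define T where "T x = prob {\<omega> \<in> space M. \<bar>Z \<omega>\<bar> > x}" for x
  define P where "P x = prob {\<omega> \<in> space M. Z \<omega> > x}" for x
  have T_anti: "T y \<le> T x" and P_anti: "P y \<le> P x" if "x \<le> y" for x y
    using that by (auto simp: T_def P_def intro!: finite_measure_mono)
  obtain \<eta> where \<eta>: "0 < \<eta>" "\<eta> < 1" "\<kappa> * (1 - (1 - \<eta>) / (\<alpha> + \<eta>)) < c0"
    by (rule exists_exponent_slack[OF \<alpha> \<kappa>(1) c0 \<kappa>(2)])
  have ratio: "((\<lambda>x. T (2 * x) / T x) \<longlongrightarrow> 2 powr (-\<alpha>)) at_top"
    using tail by (intro regularly_varying_doubling_ratio[of L]) (auto simp: T_def)
  have T_nonneg: "0 \<le> T x" for x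
    by (simp add: T_def)
  have "\<eta> \<le> \<alpha>"
    using \<eta> \<alpha> by linarith
  then obtain x0 b B where "0 < x0" "0 < b"
    and lower: "\<And>x. x0 \<le> x \<Longrightarrow> b * x powr (-(\<alpha> + \<eta>)) \<le> T x"
    and upper: "\<And>x. x0 \<le> x \<Longrightarrow> T x \<le> B * x powr (-(\<alpha> - \<eta>))"
    using Potter_bounds[OF T_anti T_nonneg ratio \<eta>(1)] by blast
  have "1 - \<eta> \<le> \<alpha> - \<eta>"
    using \<alpha> by simp
  then obtain K where K: "\<And>x. 1 \<le> x \<Longrightarrow> expectation (\<lambda>\<omega>. min \<bar>Z \<omega>\<bar> x) \<le> K * x powr \<eta>"
    using expectation_min_abs_le_powr[OF Z max.cobounded2 \<eta>(1), of "\<alpha> - \<eta>" x0 B] upper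
    by (auto simp: T_def)
  have P_balance: "((\<lambda>x. P x / T x) \<longlongrightarrow> p) at_top"
    using balance by (simp add: P_def T_def)
  have "eventually (\<lambda>x. 0 < P x / T x) at_top"
    using order_tendstoD(1)[OF P_balance \<open>0 < p\<close>] .
  then have "eventually (\<lambda>x. 0 < P x) at_top"
    by eventually_elim (auto simp: P_def T_def zero_less_divide_iff)
  then have a_inf: "filterlim a at_top sequentially"
    using norming_sequence_tendsto_infinity[of P m a] P_anti m_inf a_n by (auto simp: P_def)
  have "eventually (\<lambda>n. (b * p / 4 * real (m n)) powr (1 / (\<alpha> + \<eta>)) \<le> a n) sequentially"
    using norming_sequence_lower_bound[OF _ \<open>0 < b\<close> \<open>0 < p\<close> lower P_balance a_inf] a_n \<eta> \<open>1 \<le> \<alpha>\<close>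
    by (auto simp: P_def)
  moreover have "0 \<le> expectation (\<lambda>\<omega>. min \<bar>Z \<omega>\<bar> x)" if "1 \<le> x" for x
    using that by (intro integral_nonneg_AE) auto
  moreover have "0 \<le> 1 - (1 - \<eta>) / (\<alpha> + \<eta>)"
    using \<eta> \<alpha> by (simp add: field_simps)
  ultimately show ?thesis
    using K \<eta> \<alpha> \<open>0 < b\<close> p \<epsilon> m_pos m_growth a_inf
    by (intro truncated_mean_ratio_eventually_le[of "\<lambda>x. expectation (\<lambda>\<omega>. min \<bar>Z \<omega>\<bar> x)" K \<eta> "\<alpha> + \<eta>"
          "b * p / 4" \<kappa> c0 a m C \<epsilon>]) auto
qed

section \<open>An i.i.d. sample marked by independent random grid sets\<close>

lemma (in prob_space) expectation_prod_one_plus: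
  fixes f :: "'i \<Rightarrow> 'a \<Rightarrow> real"
  assumes "finite I"
    and int: "\<And>A. A \<subseteq> I \<Longrightarrow> integrable M (\<lambda>\<omega>. \<Prod>i\<in>A. f i \<omega>)"
    and moments: "\<And>A. A \<subseteq> I \<Longrightarrow> expectation (\<lambda>\<omega>. \<Prod>i\<in>A. f i \<omega>) = (\<Prod>i\<in>A. c i)"
  shows "expectation (\<lambda>\<omega>. \<Prod>i\<in>I. 1 + f i \<omega>) = (\<Prod>i\<in>I. 1 + c i)"
proof -
  have "expectation (\<lambda>\<omega>. \<Prod>i\<in>I. 1 + f i \<omega>) = expectation (\<lambda>\<omega>. \<Sum>A\<in>Pow I. \<Prod>i\<in>A. f i \<omega>)"
    using prod_add[OF \<open>finite I\<close>, of "\<lambda>i. f i _" "\<lambda>_. 1"] by (simp add: add.commute)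
  also have "\<dots> = (\<Sum>A\<in>Pow I. expectation (\<lambda>\<omega>. \<Prod>i\<in>A. f i \<omega>))"
    using int by (intro Bochner_Integration.integral_sum) auto
  also have "\<dots> = (\<Sum>A\<in>Pow I. \<Prod>i\<in>A. c i)"
    using moments by (intro sum.cong) auto
  also have "\<dots> = (\<Prod>i\<in>I. 1 + c i)"
    using prod_add[OF \<open>finite I\<close>, of c "\<lambda>_. 1"] by (simp add: add.commute)
  finally show ?thesis .
qed

lemma (in prob_space) indep_var_of_indep_vimage_algebras:
  fixes f :: "'b \<Rightarrow> real" and g :: "'c \<Rightarrow> real"
  assumes indep: "indep_set (sets (vimage_algebra (space M) F MF)) (sets (vimage_algebra (space M) G MG))"
    and F: "\<And>\<omega>. \<omega> \<in> space M \<Longrightarrow> F \<omega> \<in> space MF" and G: "\<And>\<omega>. \<omega> \<in> space M \<Longrightarrow> G \<omega> \<in> space MG"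
    and f: "f \<in> borel_measurable MF" and g: "g \<in> borel_measurable MG"
  shows "indep_var borel (\<lambda>\<omega>. f (F \<omega>)) borel (\<lambda>\<omega>. g (G \<omega>))"
proof -
  have F_meas: "F \<in> measurable (vimage_algebra (space M) F MF) MF"
    using F by (intro measurable_vimage_algebra1) auto
  have G_meas: "G \<in> measurable (vimage_algebra (space M) G MG) MG"
    using G by (intro measurable_vimage_algebra1) auto
  define S where "S = case_bool (sets (vimage_algebra (space M) F MF)) (sets (vimage_algebra (space M) G MG))"
  define V where "V = case_bool (\<lambda>\<omega>. f (F \<omega>)) (\<lambda>\<omega>. g (G \<omega>))"
  have S_indep: "indep_sets S UNIV"
    using indep unfolding indep_set_def S_def .
  have preimages: "V b -` A \<inter> space M \<in> S b" if "A \<in> sets borel" for b A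
    using measurable_sets[OF measurable_compose[OF F_meas f] that]
      measurable_sets[OF measurable_compose[OF G_meas g] that]
    by (cases b) (simp_all add: S_def V_def)
  moreover have "S b \<subseteq> events" for b
    using S_indep unfolding indep_sets_def by blast
  ultimately have "random_variable borel (V b)" for b
    by (intro measurableI) auto
  moreover have "indep_sets (\<lambda>b. {V b -` A \<inter> space M | A. A \<in> sets borel}) UNIV"
    using preimages by (intro indep_sets_mono_sets[OF S_indep]) auto
  ultimately have "indep_vars (\<lambda>_. borel) V UNIV"
    unfolding indep_vars_def2 by auto
  moreover have "case_bool borel borel = (\<lambda>_::bool. borel :: real measure)"
    by (auto split: bool.split)
  ultimately show ?thesis
    unfolding indep_var_def V_def by (simp only:)
qed

locale iid_sample_with_random_sets = prob_space M
  for M :: "'a measure" and X :: "nat \<Rightarrow> 'a \<Rightarrow> real" and R :: "nat \<Rightarrow> nat \<Rightarrow> 'a \<Rightarrow> real set" +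
  assumes X_indep: "indep_vars (\<lambda>_. borel) X {1..}"
    and X_ident: "\<And>j. j \<ge> 1 \<Longrightarrow> distr M borel (X j) = distr M borel (X 1)"
    and R_indep: "\<And>n. indep_vars (\<lambda>_. count_space (Pow {..n})) (\<lambda>j \<omega>. grid_trace n (R n j \<omega>)) {1..}"
    and R_ident: "\<And>n j. j \<ge> 1 \<Longrightarrow>
        distr M (count_space (Pow {..n})) (\<lambda>\<omega>. grid_trace n (R n j \<omega>))
      = distr M (count_space (Pow {..n})) (\<lambda>\<omega>. grid_trace n (R n 1 \<omega>))"
    and XR_indep: "indep_set
        (sets (vimage_algebra (space M) (\<lambda>\<omega>. \<lambda>j\<in>{1..}. X j \<omega>) (PiM {1..} (\<lambda>_. borel))))
        (sets (vimage_algebra (space M)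
           (\<lambda>\<omega>. \<lambda>nj\<in>UNIV \<times> {1..}. grid_trace (fst nj) (R (fst nj) (snd nj) \<omega>))
           (PiM (UNIV \<times> {1..}) (\<lambda>nj. count_space (Pow {..fst nj})))))"
begin

lemma X_measurable [measurable]: "j \<ge> 1 \<Longrightarrow> X j \<in> borel_measurable M"
  using X_indep unfolding indep_vars_def2 by auto

lemma grid_trace_measurable [measurable]:
  "j \<ge> 1 \<Longrightarrow> (\<lambda>\<omega>. grid_trace n (R n j \<omega>)) \<in> M \<rightarrow>\<^sub>M count_space (Pow {..n})"
  using R_indep[of n] unfolding indep_vars_def2 by auto

lemma expectation_prod_X:
  fixes h :: "real \<Rightarrow> real"
  assumes "finite A" "A \<subseteq> {1..}" and h: "h \<in> borel_measurable borel" "\<And>x. \<bar>h x\<bar> \<le> B"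
  shows "expectation (\<lambda>\<omega>. \<Prod>i\<in>A. h (X i \<omega>)) = expectation (\<lambda>\<omega>. h (X 1 \<omega>)) ^ card A"
    and "integrable M (\<lambda>\<omega>. \<Prod>i\<in>A. h (X i \<omega>))"
proof -
  have int: "integrable M (\<lambda>\<omega>. h (X i \<omega>))" if "i \<in> A" for i
    using that assms by (intro integrable_const_bound[where B=B]) auto
  have indep: "indep_vars (\<lambda>_. borel) (\<lambda>i \<omega>. h (X i \<omega>)) A"
    using assms by (intro indep_vars_compose2[OF indep_vars_subset[OF X_indep]]) auto
  have "expectation (\<lambda>\<omega>. h (X i \<omega>)) = expectation (\<lambda>\<omega>. h (X 1 \<omega>))" if "i \<in> A" for i
  proof -
    have "1 \<le> i"
      using that assms(2) by auto
    have "expectation (\<lambda>\<omega>. h (X i \<omega>)) = integral\<^sup>L (distr M borel (X i)) h"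
      using integral_distr[OF X_measurable[OF \<open>1 \<le> i\<close>] h(1)] by simp
    also have "\<dots> = integral\<^sup>L (distr M borel (X 1)) h"
      using X_ident[OF \<open>1 \<le> i\<close>] by simp
    finally show ?thesis
      using h by (simp add: integral_distr)
  qed
  then show "expectation (\<lambda>\<omega>. \<Prod>i\<in>A. h (X i \<omega>)) = expectation (\<lambda>\<omega>. h (X 1 \<omega>)) ^ card A"
    using indep_vars_lebesgue_integral[OF \<open>finite A\<close> indep int] by simp
  show "integrable M (\<lambda>\<omega>. \<Prod>i\<in>A. h (X i \<omega>))"
    using indep_vars_integrable[OF \<open>finite A\<close> indep int] by simp
qed

lemma expectation_prod_grid_trace:
  fixes g :: "nat set \<Rightarrow> real"
  assumes "finite A" "A \<subseteq> {1..}" and g: "\<And>S. \<bar>g S\<bar> \<le> B"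
  shows "expectation (\<lambda>\<omega>. \<Prod>i\<in>A. g (grid_trace n (R n i \<omega>)))
      = expectation (\<lambda>\<omega>. g (grid_trace n (R n 1 \<omega>))) ^ card A"
    and "integrable M (\<lambda>\<omega>. \<Prod>i\<in>A. g (grid_trace n (R n i \<omega>)))"
proof -
  have "(\<lambda>\<omega>. g (grid_trace n (R n i \<omega>))) \<in> borel_measurable M" if "i \<in> A" for i
    using that assms by (intro measurable_compose[OF grid_trace_measurable]) auto
  then have int: "integrable M (\<lambda>\<omega>. g (grid_trace n (R n i \<omega>)))" if "i \<in> A" for i
    using that g by (intro integrable_const_bound[where B=B]) auto
  have indep: "indep_vars (\<lambda>_. borel) (\<lambda>i \<omega>. g (grid_trace n (R n i \<omega>))) A"
    using assms by (intro indep_vars_compose2[OF indep_vars_subset[OF R_indep]]) auto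
  have "expectation (\<lambda>\<omega>. g (grid_trace n (R n i \<omega>))) = expectation (\<lambda>\<omega>. g (grid_trace n (R n 1 \<omega>)))"
    if "i \<in> A" for i
  proof -
    have "1 \<le> i"
      using that assms(2) by auto
    have "expectation (\<lambda>\<omega>. g (grid_trace n (R n i \<omega>)))
        = integral\<^sup>L (distr M (count_space (Pow {..n})) (\<lambda>\<omega>. grid_trace n (R n i \<omega>))) g"
      using integral_distr[OF grid_trace_measurable[OF \<open>1 \<le> i\<close>], of g n] by simp
    also have "\<dots> = integral\<^sup>L (distr M (count_space (Pow {..n})) (\<lambda>\<omega>. grid_trace n (R n 1 \<omega>))) g"
      using R_ident[OF \<open>1 \<le> i\<close>] by simp
    finally show ?thesis
      by (simp add: integral_distr)
  qed
  then show "expectation (\<lambda>\<omega>. \<Prod>i\<in>A. g (grid_trace n (R n i \<omega>)))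
      = expectation (\<lambda>\<omega>. g (grid_trace n (R n 1 \<omega>))) ^ card A"
    using indep_vars_lebesgue_integral[OF \<open>finite A\<close> indep int] by simp
  show "integrable M (\<lambda>\<omega>. \<Prod>i\<in>A. g (grid_trace n (R n i \<omega>)))"
    using indep_vars_integrable[OF \<open>finite A\<close> indep int] by simp
qed

lemma expectation_prod_X_grid_trace:
  fixes h :: "real \<Rightarrow> real" and g :: "nat set \<Rightarrow> real"
  assumes A: "finite A" "A \<subseteq> {1..}"
    and h: "h \<in> borel_measurable borel" "\<And>x. \<bar>h x\<bar> \<le> B" and g: "\<And>S. \<bar>g S\<bar> \<le> B'"
  shows "expectation (\<lambda>\<omega>. \<Prod>i\<in>A. h (X i \<omega>) * g (grid_trace n (R n i \<omega>)))
    = (expectation (\<lambda>\<omega>. h (X 1 \<omega>)) * expectation (\<lambda>\<omega>. g (grid_trace n (R n 1 \<omega>)))) ^ card A"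
    and "integrable M (\<lambda>\<omega>. \<Prod>i\<in>A. h (X i \<omega>) * g (grid_trace n (R n i \<omega>)))"
proof -
  define U where "U \<omega> = (\<Prod>i\<in>A. h (X i \<omega>))" for \<omega>
  define V where "V \<omega> = (\<Prod>i\<in>A. g (grid_trace n (R n i \<omega>)))" for \<omega>
  have "indep_var borel (\<lambda>\<omega>. (\<lambda>x. \<Prod>i\<in>A. h (x i)) (\<lambda>j\<in>{1..}. X j \<omega>))
      borel (\<lambda>\<omega>. (\<lambda>S. \<Prod>i\<in>A. g (S (n, i)))
        (\<lambda>nj\<in>UNIV \<times> {1..}. grid_trace (fst nj) (R (fst nj) (snd nj) \<omega>)))"
  proof (rule indep_var_of_indep_vimage_algebras[OF XR_indep])
    show "(\<lambda>x. \<Prod>i\<in>A. h (x i)) \<in> borel_measurable (PiM {1..} (\<lambda>_. borel))"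
      using A by (intro borel_measurable_prod measurable_compose[OF _ h(1)] measurable_component_singleton) auto
    show "(\<lambda>S. \<Prod>i\<in>A. g (S (n, i))) \<in> borel_measurable (PiM (UNIV \<times> {1..}) (\<lambda>nj. count_space (Pow {..fst nj})))"
      using A by (intro borel_measurable_prod measurable_compose[OF measurable_component_singleton]) auto
  qed (auto simp: space_PiM grid_trace_def)
  moreover have "(\<lambda>\<omega>. (\<lambda>x. \<Prod>i\<in>A. h (x i)) (\<lambda>j\<in>{1..}. X j \<omega>)) = U"
    and "(\<lambda>\<omega>. (\<lambda>S. \<Prod>i\<in>A. g (S (n, i))) (\<lambda>nj\<in>UNIV \<times> {1..}. grid_trace (fst nj) (R (fst nj) (snd nj) \<omega>))) = V"
    using A by (auto simp: U_def V_def fun_eq_iff intro!: prod.cong)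
  ultimately have "indep_var borel U borel V"
    by simp
  moreover have "integrable M U" "integrable M V"
    unfolding U_def V_def by (rule expectation_prod_X(2)[OF A h], rule expectation_prod_grid_trace(2)[OF A g])
  ultimately have "expectation (\<lambda>\<omega>. U \<omega> * V \<omega>) = expectation U * expectation V"
    and UV: "integrable M (\<lambda>\<omega>. U \<omega> * V \<omega>)"
    by (rule indep_var_lebesgue_integral, rule indep_var_integrable)
  moreover have "expectation U = expectation (\<lambda>\<omega>. h (X 1 \<omega>)) ^ card A"
    unfolding U_def by (rule expectation_prod_X(1)[OF A h])
  moreover have "expectation V = expectation (\<lambda>\<omega>. g (grid_trace n (R n 1 \<omega>))) ^ card A"
    unfolding V_def by (rule expectation_prod_grid_trace(1)[OF A g])
  ultimately show "expectation (\<lambda>\<omega>. \<Prod>i\<in>A. h (X i \<omega>) * g (grid_trace n (R n i \<omega>)))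
    = (expectation (\<lambda>\<omega>. h (X 1 \<omega>)) * expectation (\<lambda>\<omega>. g (grid_trace n (R n 1 \<omega>)))) ^ card A"
    by (simp add: U_def V_def prod.distrib power_mult_distrib)
  show "integrable M (\<lambda>\<omega>. \<Prod>i\<in>A. h (X i \<omega>) * g (grid_trace n (R n i \<omega>)))"
    using UV by (simp add: U_def V_def prod.distrib)
qed

lemma expectation_grid_point_indicator:
  assumes "k \<le> n"
  shows "expectation (\<lambda>\<omega>. of_bool (k \<in> grid_trace n (R n 1 \<omega>)))
    = prob {\<omega> \<in> space M. real k / real n \<in> R n 1 \<omega>}"
proof -
  have "(\<lambda>\<omega>. grid_trace n (R n 1 \<omega>)) -` {S \<in> Pow {..n}. k \<in> S} \<inter> space M \<in> events"
    by (rule measurable_sets[OF grid_trace_measurable]) auto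
  also have "(\<lambda>\<omega>. grid_trace n (R n 1 \<omega>)) -` {S \<in> Pow {..n}. k \<in> S} \<inter> space M
      = {\<omega> \<in> space M. real k / real n \<in> R n 1 \<omega>}"
    using assms by (auto simp: grid_trace_def)
  finally have event: "{\<omega> \<in> space M. real k / real n \<in> R n 1 \<omega>} \<in> events" .
  have "expectation (\<lambda>\<omega>. of_bool (k \<in> grid_trace n (R n 1 \<omega>)))
      = expectation (indicator {\<omega> \<in> space M. real k / real n \<in> R n 1 \<omega>})"
    using assms by (intro Bochner_Integration.integral_cong) (auto simp: grid_trace_def)
  also have "\<dots> = prob {\<omega> \<in> space M. real k / real n \<in> R n 1 \<omega>}"
    using event by simp
  finally show ?thesis .
qed

end

section \<open>Exponential tail bounds for truncated masked sums\<close>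

lemma one_plus_mult_power_le_exp:
  fixes q u :: real
  assumes "0 \<le> q" "q \<le> 1" "-1 \<le> u"
  shows "(1 + q * u) ^ N \<le> exp (N * q * u)"
proof -
  have "q * (-1) \<le> q * u"
    using assms by (intro mult_left_mono)
  with assms have "0 \<le> 1 + q * u"
    by linarith
  then have "(1 + q * u) ^ N \<le> exp (q * u) ^ N"
    by (intro power_mono) simp_all
  also have "\<dots> = exp (N * q * u)"
    by (simp add: exp_of_nat_mult[symmetric] mult.assoc)
  finally show ?thesis .
qed

lemma exp_minus_one_bounds:
  fixes y :: real
  assumes "\<bar>y\<bar> \<le> 1"
  shows "exp y - 1 \<le> 2 * \<bar>y\<bar>" and "\<bar>exp y - 1\<bar> \<le> 2"
proof -
  show "exp y - 1 \<le> 2 * \<bar>y\<bar>"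
  proof (cases "0 \<le> y")
    case True
    then have "exp y \<le> 1 + y + y\<^sup>2"
      using assms exp_bound[of y] by auto
    moreover have "y\<^sup>2 \<le> y"
      using True assms by (simp add: power2_eq_square mult_left_le)
    ultimately show ?thesis
      using True by auto
  next
    case False
    then have "exp y \<le> 1"
      by simp
    with False show ?thesis
      by linarith
  qed
  have "exp y \<le> exp 1"
    using assms by simp
  then show "\<bar>exp y - 1\<bar> \<le> 2"
    using exp_le exp_gt_zero[of y] unfolding abs_le_iff by linarith
qed

definition truncated :: "real \<Rightarrow> real \<Rightarrow> real" where
  "truncated b x = (if \<bar>x\<bar> \<le> b then x else 0)"

lemma truncated_measurable [measurable]: "truncated b \<in> borel_measurable borel"
  unfolding truncated_def by measurable

lemma abs_truncated_le: "0 \<le> b \<Longrightarrow> \<bar>truncated b x\<bar> \<le> min \<bar>x\<bar> b"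
  by (simp add: truncated_def)

lemma (in prob_space) expectation_exp_truncated_minus_one_le:
  assumes Z[measurable]: "Z \<in> borel_measurable M" and "0 \<le> b" "\<bar>\<theta>\<bar> * b \<le> 1"
  shows "expectation (\<lambda>\<omega>. exp (\<theta> * truncated b (Z \<omega>)) - 1) \<le> 2 * \<bar>\<theta>\<bar> * expectation (\<lambda>\<omega>. min \<bar>Z \<omega>\<bar> b)"
proof -
  have small: "\<bar>\<theta> * truncated b (Z \<omega>)\<bar> \<le> \<bar>\<theta>\<bar> * min \<bar>Z \<omega>\<bar> b" for \<omega>
    using abs_truncated_le[OF \<open>0 \<le> b\<close>] by (simp add: abs_mult mult_left_mono)
  have "\<bar>\<theta>\<bar> * min \<bar>Z \<omega>\<bar> b \<le> 1" for \<omega>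
    using \<open>\<bar>\<theta>\<bar> * b \<le> 1\<close> mult_left_mono[of "min \<bar>Z \<omega>\<bar> b" b "\<bar>\<theta>\<bar>"] by simp
  with small have le_one: "\<bar>\<theta> * truncated b (Z \<omega>)\<bar> \<le> 1" for \<omega>
    by (meson order_trans)
  have "expectation (\<lambda>\<omega>. exp (\<theta> * truncated b (Z \<omega>)) - 1)
      \<le> expectation (\<lambda>\<omega>. 2 * \<bar>\<theta>\<bar> * min \<bar>Z \<omega>\<bar> b)"
  proof (rule integral_mono)
    show "integrable M (\<lambda>\<omega>. exp (\<theta> * truncated b (Z \<omega>)) - 1)"
      using exp_minus_one_bounds(2)[OF le_one] by (intro integrable_const_bound[where B=2]) auto
    show "integrable M (\<lambda>\<omega>. 2 * \<bar>\<theta>\<bar> * min \<bar>Z \<omega>\<bar> b)"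
      using \<open>0 \<le> b\<close> by (intro integrable_mult_right integrable_const_bound[where B=b]) auto
    show "exp (\<theta> * truncated b (Z \<omega>)) - 1 \<le> 2 * \<bar>\<theta>\<bar> * min \<bar>Z \<omega>\<bar> b" for \<omega>
      using exp_minus_one_bounds(1)[OF le_one[of \<omega>]] small[of \<omega>] unfolding mult.assoc by linarith
  qed
  also have "\<dots> = 2 * \<bar>\<theta>\<bar> * expectation (\<lambda>\<omega>. min \<bar>Z \<omega>\<bar> b)"
    by simp
  finally show ?thesis .
qed

context iid_sample_with_random_sets
begin

text \<open>The masks are 0/1-valued, so the exponential of the masked sum is the product of the
  factors 1 + (exp (\<theta> h (X i)) - 1) B i; expanding it, every monomial splits into a function of
  the sample times a function of the random sets, and both factors have product moments.\<close>

lemma mgf_masked_sum_le: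
  fixes h :: "real \<Rightarrow> real"
  assumes I: "finite I" "I \<subseteq> {1..}" and "k \<le> n"
    and h: "h \<in> borel_measurable borel" "\<And>x. \<bar>\<theta> * h x\<bar> \<le> 1"
  shows "expectation (\<lambda>\<omega>. exp (\<theta> * (\<Sum>i\<in>I. h (X i \<omega>) * of_bool (real k / real n \<in> R n i \<omega>))))
    \<le> exp (card I * prob {\<omega> \<in> space M. real k / real n \<in> R n 1 \<omega>}
             * expectation (\<lambda>\<omega>. exp (\<theta> * h (X 1 \<omega>)) - 1))"
proof -
  define e where "e x = exp (\<theta> * h x) - 1" for x
  define hit :: "nat set \<Rightarrow> real" where "hit S = of_bool (k \<in> S)" for S
  define q where "q = prob {\<omega> \<in> space M. real k / real n \<in> R n 1 \<omega>}"
  define u where "u = expectation (\<lambda>\<omega>. e (X 1 \<omega>))"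
  have e_measurable: "e \<in> borel_measurable borel"
    unfolding e_def using h(1) by measurable
  have e_bound: "\<bar>e x\<bar> \<le> 2" for x
    unfolding e_def using h(2) by (rule exp_minus_one_bounds(2))
  have hit_bound: "\<bar>hit S\<bar> \<le> 1" for S
    by (simp add: hit_def)
  have "exp (\<theta> * (\<Sum>i\<in>I. h (X i \<omega>) * of_bool (real k / real n \<in> R n i \<omega>)))
      = (\<Prod>i\<in>I. 1 + e (X i \<omega>) * hit (grid_trace n (R n i \<omega>)))" for \<omega>
    using I \<open>k \<le> n\<close>
    by (simp add: sum_distrib_left exp_sum e_def hit_def grid_trace_def of_bool_def if_distrib cong: if_cong)
  then have "expectation (\<lambda>\<omega>. exp (\<theta> * (\<Sum>i\<in>I. h (X i \<omega>) * of_bool (real k / real n \<in> R n i \<omega>))))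
      = expectation (\<lambda>\<omega>. \<Prod>i\<in>I. 1 + e (X i \<omega>) * hit (grid_trace n (R n i \<omega>)))"
    by simp
  also have "\<dots> = (\<Prod>i\<in>I. 1 + u * q)"
  proof (rule expectation_prod_one_plus[OF I(1)])
    fix A assume "A \<subseteq> I"
    then have A: "finite A" "A \<subseteq> {1..}"
      using I finite_subset by blast+
    note moments = expectation_prod_X_grid_trace[where g=hit and n=n, OF A e_measurable e_bound hit_bound]
    show "integrable M (\<lambda>\<omega>. \<Prod>i\<in>A. e (X i \<omega>) * hit (grid_trace n (R n i \<omega>)))"
      by (rule moments(2))
    show "expectation (\<lambda>\<omega>. \<Prod>i\<in>A. e (X i \<omega>) * hit (grid_trace n (R n i \<omega>))) = (\<Prod>i\<in>A. u * q)"
      using moments(1) expectation_grid_point_indicator[OF \<open>k \<le> n\<close>] by (simp add: u_def q_def hit_def)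
  qed
  also have "\<dots> = (1 + q * u) ^ card I"
    by (simp add: mult.commute)
  also have "\<dots> \<le> exp (card I * q * u)"
  proof (rule one_plus_mult_power_le_exp)
    show "0 \<le> q" "q \<le> 1"
      by (simp_all add: q_def)
    have "-1 \<le> e x" for x
      by (simp add: e_def)
    then show "-1 \<le> u"
      unfolding u_def using e_bound
      by (intro integral_ge_const integrable_const_bound[where B=2] AE_I2
          measurable_compose[OF X_measurable e_measurable]) auto
  qed
  finally show ?thesis
    by (simp add: q_def u_def e_def)
qed

lemma masked_sum_measurable:
  fixes f :: "real \<Rightarrow> real"
  assumes "I \<subseteq> {1..}" "k \<le> n" "f \<in> borel_measurable borel"
  shows "(\<lambda>\<omega>. \<Sum>i\<in>I. f (X i \<omega>) * of_bool (real k / real n \<in> R n i \<omega>)) \<in> borel_measurable M"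
proof -
  have "of_bool (real k / real n \<in> R n i \<omega>) = (of_bool (k \<in> grid_trace n (R n i \<omega>)) :: real)" for i \<omega>
    using \<open>k \<le> n\<close> by (simp add: grid_trace_def)
  moreover have X_f: "(\<lambda>\<omega>. f (X i \<omega>)) \<in> borel_measurable M"
    and hit: "(\<lambda>\<omega>. of_bool (k \<in> grid_trace n (R n i \<omega>)) :: real) \<in> borel_measurable M" if "i \<in> I" for i
    using that assms by (auto intro!: measurable_compose[OF X_measurable] measurable_compose[OF grid_trace_measurable])
  then have "(\<lambda>\<omega>. \<Sum>i\<in>I. f (X i \<omega>) * of_bool (k \<in> grid_trace n (R n i \<omega>))) \<in> borel_measurable M"
    by (intro borel_measurable_sum borel_measurable_times X_f hit)
  ultimately show ?thesis
    by simp
qed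

lemma masked_sum_tail_le:
  assumes I: "finite I" "I \<subseteq> {1..}" and "k \<le> n" "0 \<le> b" "\<bar>\<theta>\<bar> * b \<le> 1"
  shows "prob {\<omega> \<in> space M. t \<le> \<theta> * (\<Sum>i\<in>I. truncated b (X i \<omega>) * of_bool (real k / real n \<in> R n i \<omega>))}
    \<le> exp (2 * \<bar>\<theta>\<bar> * card I * prob {\<omega> \<in> space M. real k / real n \<in> R n 1 \<omega>}
             * expectation (\<lambda>\<omega>. min \<bar>X 1 \<omega>\<bar> b) - t)"
proof -
  define S where "S \<omega> = (\<Sum>i\<in>I. truncated b (X i \<omega>) * of_bool (real k / real n \<in> R n i \<omega>))" for \<omega>
  define q where "q = prob {\<omega> \<in> space M. real k / real n \<in> R n 1 \<omega>}"
  have S_measurable: "S \<in> borel_measurable M"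
    unfolding S_def using I \<open>k \<le> n\<close> by (intro masked_sum_measurable) auto
  have step_le_one: "\<bar>\<theta> * truncated b x\<bar> \<le> 1" for x
  proof -
    have "\<bar>\<theta> * truncated b x\<bar> \<le> \<bar>\<theta>\<bar> * b"
      using abs_truncated_le[OF \<open>0 \<le> b\<close>, of x] by (simp add: abs_mult mult_left_mono)
    with \<open>\<bar>\<theta>\<bar> * b \<le> 1\<close> show ?thesis
      by linarith
  qed
  have "\<bar>\<theta> * S \<omega>\<bar> \<le> card I" for \<omega>
  proof -
    have "\<bar>\<theta> * S \<omega>\<bar> \<le> (\<Sum>i\<in>I. \<bar>\<theta> * truncated b (X i \<omega>) * of_bool (real k / real n \<in> R n i \<omega>)\<bar>)"
      unfolding S_def sum_distrib_left mult.assoc by (rule sum_abs)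
    also have "\<dots> \<le> (\<Sum>i\<in>I. 1)"
      using step_le_one by (intro sum_mono) (simp add: abs_mult)
    finally show ?thesis
      by simp
  qed
  then have "\<theta> * S \<omega> \<le> card I" for \<omega>
    using abs_le_D1 by blast
  then have "integrable M (\<lambda>\<omega>. exp (\<theta> * S \<omega>))"
    using S_measurable by (intro integrable_const_bound[where B="exp (card I)"]) auto
  then have "prob {\<omega> \<in> space M. exp t \<le> exp (\<theta> * S \<omega>)} \<le> expectation (\<lambda>\<omega>. exp (\<theta> * S \<omega>)) / exp t"
    by (intro integral_Markov_inequality_measure[where A="space M"]) auto
  also have "\<dots> \<le> exp (card I * q * expectation (\<lambda>\<omega>. exp (\<theta> * truncated b (X 1 \<omega>)) - 1)) / exp t"
    unfolding S_def q_def using step_le_one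
    by (intro divide_right_mono mgf_masked_sum_le[OF I \<open>k \<le> n\<close> truncated_measurable]) auto
  also have "\<dots> \<le> exp (card I * q * (2 * \<bar>\<theta>\<bar> * expectation (\<lambda>\<omega>. min \<bar>X 1 \<omega>\<bar> b))) / exp t"
    using expectation_exp_truncated_minus_one_le[OF X_measurable[of 1] \<open>0 \<le> b\<close> \<open>\<bar>\<theta>\<bar> * b \<le> 1\<close>]
    by (intro divide_right_mono mult_left_mono exp_le_cancel_iff[THEN iffD2]) (auto simp: q_def)
  also have "\<dots> = exp (2 * \<bar>\<theta>\<bar> * card I * q * expectation (\<lambda>\<omega>. min \<bar>X 1 \<omega>\<bar> b) - t)"
    by (simp add: exp_diff ac_simps)
  finally show ?thesis
    by (simp add: S_def q_def)
qed

lemma masked_sum_abs_tail_le: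
  assumes I: "finite I" "I \<subseteq> {1..}" and "k \<le> n" "0 \<le> b" "0 < \<theta>" "\<theta> * b \<le> 1"
  shows "prob {\<omega> \<in> space M. t \<le> \<bar>\<Sum>i\<in>I. truncated b (X i \<omega>) * of_bool (real k / real n \<in> R n i \<omega>)\<bar>}
    \<le> 2 * exp (2 * \<theta> * card I * prob {\<omega> \<in> space M. real k / real n \<in> R n 1 \<omega>}
             * expectation (\<lambda>\<omega>. min \<bar>X 1 \<omega>\<bar> b) - \<theta> * t)"
proof -
  define S where "S \<omega> = (\<Sum>i\<in>I. truncated b (X i \<omega>) * of_bool (real k / real n \<in> R n i \<omega>))" for \<omega>
  define B where "B = exp (2 * \<theta> * card I * prob {\<omega> \<in> space M. real k / real n \<in> R n 1 \<omega>}
             * expectation (\<lambda>\<omega>. min \<bar>X 1 \<omega>\<bar> b) - \<theta> * t)"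
  have S_measurable[measurable]: "S \<in> borel_measurable M"
    unfolding S_def using I \<open>k \<le> n\<close> by (intro masked_sum_measurable) auto
  have "{\<omega> \<in> space M. t \<le> \<bar>S \<omega>\<bar>}
      \<subseteq> {\<omega> \<in> space M. \<theta> * t \<le> \<theta> * S \<omega>} \<union> {\<omega> \<in> space M. \<theta> * t \<le> (-\<theta>) * S \<omega>}"
  proof (intro subsetI)
    fix \<omega> assume \<omega>: "\<omega> \<in> {\<omega> \<in> space M. t \<le> \<bar>S \<omega>\<bar>}"
    show "\<omega> \<in> {\<omega> \<in> space M. \<theta> * t \<le> \<theta> * S \<omega>} \<union> {\<omega> \<in> space M. \<theta> * t \<le> (-\<theta>) * S \<omega>}"
    proof (cases "0 \<le> S \<omega>")
      case True
      with \<omega> \<open>0 < \<theta>\<close> show ?thesis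
        by (auto intro: mult_left_mono)
    next
      case False
      with \<omega> have "\<theta> * t \<le> \<theta> * (- S \<omega>)"
        using \<open>0 < \<theta>\<close> by (intro mult_left_mono) auto
      with \<omega> show ?thesis
        by simp
    qed
  qed
  then have "prob {\<omega> \<in> space M. t \<le> \<bar>S \<omega>\<bar>}
      \<le> prob {\<omega> \<in> space M. \<theta> * t \<le> \<theta> * S \<omega>} + prob {\<omega> \<in> space M. \<theta> * t \<le> (-\<theta>) * S \<omega>}"
    by (intro order.trans[OF finite_measure_mono measure_Un_le]) auto
  also have "\<dots> \<le> B + B"
  proof (rule add_mono)
    show "prob {\<omega> \<in> space M. \<theta> * t \<le> \<theta> * S \<omega>} \<le> B"
      using masked_sum_tail_le[OF I \<open>k \<le> n\<close> \<open>0 \<le> b\<close>, of \<theta> "\<theta> * t"] assms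
      unfolding S_def B_def by simp
    show "prob {\<omega> \<in> space M. \<theta> * t \<le> (-\<theta>) * S \<omega>} \<le> B"
      using masked_sum_tail_le[OF I \<open>k \<le> n\<close> \<open>0 \<le> b\<close>, of "-\<theta>" "\<theta> * t"] assms
      unfolding S_def B_def by simp
  qed
  finally show ?thesis
    by (simp add: S_def B_def)
qed

end

section \<open>The truncated sums W\<close>

lemma abs_sum_permuted_without_prefix_le:
  fixes g :: "nat \<Rightarrow> real" and \<sigma> :: "nat \<Rightarrow> nat"
  assumes \<sigma>: "bij_betw \<sigma> {1..N} {1..N}" and g: "\<And>i. \<bar>g i\<bar> \<le> D"
  shows "\<bar>\<Sum>j \<in> {j \<in> {1..N}. P (\<sigma> j)} - {1..l}. g (\<sigma> j)\<bar>
    \<le> \<bar>\<Sum>i\<in>{1..N}. g i * of_bool (P i)\<bar> + real l * D"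
proof -
  define H where "H = {j \<in> {1..N}. P (\<sigma> j)}"
  have "(\<Sum>j\<in>H. g (\<sigma> j)) = (\<Sum>j\<in>{1..N}. g (\<sigma> j) * of_bool (P (\<sigma> j)))"
    unfolding H_def by (simp add: sum.inter_filter[symmetric] of_bool_def if_distrib cong: if_cong)
  also have "\<dots> = (\<Sum>i\<in>{1..N}. g i * of_bool (P i))"
    by (rule sum.reindex_bij_betw[OF \<sigma>, of "\<lambda>i. g i * of_bool (P i)"])
  finally have full: "(\<Sum>j\<in>H. g (\<sigma> j)) = (\<Sum>i\<in>{1..N}. g i * of_bool (P i))" .
  have "\<bar>\<Sum>j\<in>H \<inter> {1..l}. g (\<sigma> j)\<bar> \<le> (\<Sum>j\<in>H \<inter> {1..l}. \<bar>g (\<sigma> j)\<bar>)"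
    by (rule sum_abs)
  also have "\<dots> \<le> real (card (H \<inter> {1..l})) * D"
    using g sum_bounded_above[of "H \<inter> {1..l}" "\<lambda>j. \<bar>g (\<sigma> j)\<bar>" D] by auto
  also have "\<dots> \<le> real l * D"
    using g[of 0] card_mono[of "{1..l}" "H \<inter> {1..l}"] by (intro mult_right_mono) auto
  finally have prefix: "\<bar>\<Sum>j\<in>H \<inter> {1..l}. g (\<sigma> j)\<bar> \<le> real l * D" .
  have "(\<Sum>j\<in>H. g (\<sigma> j)) = (\<Sum>j\<in>H - {1..l}. g (\<sigma> j)) + (\<Sum>j\<in>H \<inter> {1..l}. g (\<sigma> j))"
    by (metis add.commute finite_atLeastAtMost finite_subset mem_Collect_eq subsetI H_def sum.Int_Diff)
  with full prefix show ?thesis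
    unfolding H_def[symmetric] by linarith
qed

lemma abs_Wsum_le:
  fixes a :: "nat \<Rightarrow> real" and \<gamma> :: real and n :: nat
  assumes "bij_betw (\<sigma> n \<omega>) {1..m n} {1..m n}" "0 < a n"
  defines "b \<equiv> real n powr (-\<gamma>) * a n"
  shows "\<bar>Wsum X R \<sigma> m a \<gamma> n l k \<omega>\<bar>
    \<le> \<bar>\<Sum>i\<in>{1..m n}. truncated b (X i \<omega>) * of_bool (real k / real n \<in> R n i \<omega>)\<bar> + real l * b"
proof -
  have "X i \<omega> * (if \<bar>X i \<omega>\<bar> / a n \<le> real n powr (-\<gamma>) then 1 else 0) = truncated b (X i \<omega>)" for i
    using \<open>0 < a n\<close> by (simp add: truncated_def b_def divide_le_eq)
  then have "Wsum X R \<sigma> m a \<gamma> n l k \<omega>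
      = (\<Sum>j \<in> {j \<in> {1..m n}. real k / real n \<in> R n (\<sigma> n \<omega> j) \<omega>} - {1..l}. truncated b (X (\<sigma> n \<omega> j) \<omega>))"
    by (simp add: Wsum_def hatJ_def)
  also have "\<bar>\<dots>\<bar> \<le> \<bar>\<Sum>i\<in>{1..m n}. truncated b (X i \<omega>) * of_bool (real k / real n \<in> R n i \<omega>)\<bar> + real l * b"
    using assms by (intro abs_sum_permuted_without_prefix_le abs_truncated_le[THEN order_trans]) auto
  finally show ?thesis .
qed

context iid_sample_with_random_sets
begin

text \<open>The multiplier \<theta> = n powr \<gamma> / a n is the largest one compatible with the truncation
  level n powr -\<gamma> * a n.\<close>

lemma masked_sum_large_prob_le:
  fixes a :: "nat \<Rightarrow> real" and m :: "nat \<Rightarrow> nat"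
  assumes "k \<le> n" "1 \<le> n" "0 \<le> \<gamma>" "1 \<le> a n" "0 < C"
    and hit: "prob {\<omega> \<in> space M. real k / real n \<in> R n 1 \<omega>} \<le> C * real n powr (-c0)"
    and ratio: "real (m n) * real n powr (-c0) * expectation (\<lambda>\<omega>. min \<bar>X 1 \<omega>\<bar> (a n)) / a n \<le> \<epsilon> / (8 * C)"
  shows "prob {\<omega> \<in> space M. \<epsilon> * a n / 2 \<le> \<bar>\<Sum>i\<in>{1..m n}.
      truncated (real n powr (-\<gamma>) * a n) (X i \<omega>) * of_bool (real k / real n \<in> R n i \<omega>)\<bar>}
    \<le> 2 * exp (- (\<epsilon> * real n powr \<gamma> / 4))"
proof -
  define b where "b = real n powr (-\<gamma>) * a n"
  define \<theta> where "\<theta> = real n powr \<gamma> / a n"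
  define q where "q = prob {\<omega> \<in> space M. real k / real n \<in> R n 1 \<omega>}"
  define \<mu> where "\<mu> c = expectation (\<lambda>\<omega>. min \<bar>X 1 \<omega>\<bar> c)" for c
  have "real n powr (-\<gamma>) \<le> 1"
    using \<open>1 \<le> n\<close> \<open>0 \<le> \<gamma>\<close> by (simp add: powr_minus inverse_le_1_iff ge_one_powr_ge_zero)
  then have b: "0 \<le> b" "b \<le> a n"
    using \<open>1 \<le> a n\<close> mult_left_le_one_le[of "a n"] by (auto simp: b_def mult.commute)
  have \<theta>: "0 < \<theta>" "\<theta> * b = 1"
    using \<open>1 \<le> n\<close> \<open>1 \<le> a n\<close> by (auto simp: \<theta>_def b_def powr_minus)
  have "\<mu> b \<le> \<mu> (a n)"
    unfolding \<mu>_def using b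
    by (intro integral_mono integrable_const_bound[where B=b] integrable_const_bound[where B="a n"]) auto
  moreover have "0 \<le> \<mu> b"
    unfolding \<mu>_def using b by (intro integral_nonneg_AE) auto
  moreover have "0 \<le> q" "q \<le> C * real n powr (-c0)"
    using hit by (simp_all add: q_def)
  ultimately have "2 * \<theta> * real (m n) * q * \<mu> b \<le> 2 * \<theta> * real (m n) * (C * real n powr (-c0)) * \<mu> (a n)"
    using \<theta> by (intro mult_mono mult_left_mono) auto
  also have "\<dots> = 2 * C * real n powr \<gamma> * (real (m n) * real n powr (-c0) * \<mu> (a n) / a n)"
    by (simp add: \<theta>_def)
  also have "\<dots> \<le> 2 * C * real n powr \<gamma> * (\<epsilon> / (8 * C))"
    using ratio \<open>0 < C\<close> by (intro mult_left_mono) (auto simp: \<mu>_def)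
  also have "\<dots> = \<epsilon> * real n powr \<gamma> / 4"
    using \<open>0 < C\<close> by simp
  finally have exponent: "2 * \<theta> * real (m n) * q * \<mu> b \<le> \<epsilon> * real n powr \<gamma> / 4" .
  have "prob {\<omega> \<in> space M. \<epsilon> * a n / 2 \<le> \<bar>\<Sum>i\<in>{1..m n}.
      truncated b (X i \<omega>) * of_bool (real k / real n \<in> R n i \<omega>)\<bar>}
    \<le> 2 * exp (2 * \<theta> * card {1..m n} * q * \<mu> b - \<theta> * (\<epsilon> * a n / 2))"
    unfolding q_def \<mu>_def using \<open>k \<le> n\<close> b \<theta> by (intro masked_sum_abs_tail_le) auto
  also have "\<theta> * (\<epsilon> * a n / 2) = \<epsilon> * real n powr \<gamma> / 2"
    using \<open>1 \<le> a n\<close> by (simp add: \<theta>_def)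
  also have "2 * exp (2 * \<theta> * card {1..m n} * q * \<mu> b - \<epsilon> * real n powr \<gamma> / 2)
      \<le> 2 * exp (- (\<epsilon> * real n powr \<gamma> / 4))"
    using exponent by simp
  finally show ?thesis
    by (simp add: b_def)
qed

lemma Wsum_max_event_subset:
  fixes \<sigma> :: "nat \<Rightarrow> 'a \<Rightarrow> nat \<Rightarrow> nat" and m :: "nat \<Rightarrow> nat" and a :: "nat \<Rightarrow> real" and K :: "nat set"
  assumes \<sigma>_perm: "\<And>\<omega>. \<omega> \<in> space M \<Longrightarrow> bij_betw (\<sigma> n \<omega>) {1..m n} {1..m n}"
    and "finite K" "0 < \<epsilon>" "0 < a n"
    and prefix: "real l * real n powr (-\<gamma>) \<le> \<epsilon> / 2"
  shows "{\<omega> \<in> space M. Max (insert 0 ((\<lambda>k. \<bar>Wsum X R \<sigma> m a \<gamma> n l k \<omega>\<bar>) ` K)) / a n > \<epsilon>}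
    \<subseteq> (\<Union>k\<in>K. {\<omega> \<in> space M. \<epsilon> * a n / 2 \<le> \<bar>\<Sum>i\<in>{1..m n}.
        truncated (real n powr (-\<gamma>) * a n) (X i \<omega>) * of_bool (real k / real n \<in> R n i \<omega>)\<bar>})"
proof safe
  fix \<omega> assume \<omega>: "\<omega> \<in> space M" and "Max (insert 0 ((\<lambda>k. \<bar>Wsum X R \<sigma> m a \<gamma> n l k \<omega>\<bar>) ` K)) / a n > \<epsilon>"
  then have "\<epsilon> * a n < Max (insert 0 ((\<lambda>k. \<bar>Wsum X R \<sigma> m a \<gamma> n l k \<omega>\<bar>) ` K))"
    using \<open>0 < a n\<close> by (simp add: field_simps)
  moreover have "0 < \<epsilon> * a n"
    using \<open>0 < \<epsilon>\<close> \<open>0 < a n\<close> by simp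
  ultimately obtain k where k: "k \<in> K" "\<epsilon> * a n < \<bar>Wsum X R \<sigma> m a \<gamma> n l k \<omega>\<bar>"
    using \<open>finite K\<close> by (auto simp: Max_gr_iff)
  have "real l * (real n powr (-\<gamma>) * a n) \<le> \<epsilon> / 2 * a n"
    using prefix \<open>0 < a n\<close> by (simp add: mult.assoc[symmetric] mult_right_mono)
  then have "real l * (real n powr (-\<gamma>) * a n) \<le> \<epsilon> * a n / 2"
    by simp
  with k(2) abs_Wsum_le[where X=X and R=R and l=l and k=k and \<gamma>=\<gamma> and \<sigma>=\<sigma> and m=m and a=a and n=n and \<omega>=\<omega>,
      OF \<sigma>_perm[OF \<omega>] \<open>0 < a n\<close>]
  have "\<epsilon> * a n / 2 \<le> \<bar>\<Sum>i\<in>{1..m n}.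
      truncated (real n powr (-\<gamma>) * a n) (X i \<omega>) * of_bool (real k / real n \<in> R n i \<omega>)\<bar>"
    by linarith
  with k(1) \<omega> show "\<omega> \<in> (\<Union>k\<in>K. {\<omega> \<in> space M. \<epsilon> * a n / 2 \<le> \<bar>\<Sum>i\<in>{1..m n}.
        truncated (real n powr (-\<gamma>) * a n) (X i \<omega>) * of_bool (real k / real n \<in> R n i \<omega>)\<bar>})"
    by blast
qed

lemma Wsum_max_tail_le:
  fixes \<sigma> :: "nat \<Rightarrow> 'a \<Rightarrow> nat \<Rightarrow> nat" and m :: "nat \<Rightarrow> nat" and a :: "nat \<Rightarrow> real" and K :: "nat set"
  assumes \<sigma>_perm: "\<And>\<omega>. \<omega> \<in> space M \<Longrightarrow> bij_betw (\<sigma> n \<omega>) {1..m n} {1..m n}"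
    and "1 \<le> n" "0 \<le> \<gamma>" "1 \<le> a n" "0 < C" "0 < \<epsilon>" "K \<subseteq> {..n}"
    and prefix: "real l * real n powr (-\<gamma>) \<le> \<epsilon> / 2"
    and hits: "\<And>k. k \<in> K \<Longrightarrow> prob {\<omega> \<in> space M. real k / real n \<in> R n 1 \<omega>} \<le> C * real n powr (-c0)"
    and ratio: "real (m n) * real n powr (-c0) * expectation (\<lambda>\<omega>. min \<bar>X 1 \<omega>\<bar> (a n)) / a n \<le> \<epsilon> / (8 * C)"
  shows "prob {\<omega> \<in> space M. Max (insert 0 ((\<lambda>k. \<bar>Wsum X R \<sigma> m a \<gamma> n l k \<omega>\<bar>) ` K)) / a n > \<epsilon>}
    \<le> 2 * (real n + 1) * exp (- (\<epsilon> * real n powr \<gamma> / 4))"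
proof -
  define E where "E k = {\<omega> \<in> space M. \<epsilon> * a n / 2 \<le> \<bar>\<Sum>i\<in>{1..m n}.
      truncated (real n powr (-\<gamma>) * a n) (X i \<omega>) * of_bool (real k / real n \<in> R n i \<omega>)\<bar>}" for k
  have "finite K"
    using \<open>K \<subseteq> {..n}\<close> finite_subset by blast
  have E_events: "E k \<in> events" if "k \<in> K" for k
  proof -
    have "k \<le> n"
      using that \<open>K \<subseteq> {..n}\<close> by auto
    then show ?thesis
      unfolding E_def using masked_sum_measurable[of "{1..m n}" k n] by measurable
  qed
  have "{\<omega> \<in> space M. Max (insert 0 ((\<lambda>k. \<bar>Wsum X R \<sigma> m a \<gamma> n l k \<omega>\<bar>) ` K)) / a n > \<epsilon>}
      \<subseteq> (\<Union>k\<in>K. E k)"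
    unfolding E_def using \<open>1 \<le> a n\<close>
    by (intro Wsum_max_event_subset[where \<sigma>=\<sigma> and m=m and a=a and n=n, OF \<sigma>_perm \<open>finite K\<close> \<open>0 < \<epsilon>\<close> _ prefix]) auto
  then have "prob {\<omega> \<in> space M. Max (insert 0 ((\<lambda>k. \<bar>Wsum X R \<sigma> m a \<gamma> n l k \<omega>\<bar>) ` K)) / a n > \<epsilon>}
      \<le> prob (\<Union>k\<in>K. E k)"
    using E_events \<open>finite K\<close> by (intro finite_measure_mono) auto
  also have "\<dots> \<le> (\<Sum>k\<in>K. prob (E k))"
    using E_events \<open>finite K\<close> by (intro finite_measure_subadditive_finite) auto
  also have "\<dots> \<le> (\<Sum>k\<in>K. 2 * exp (- (\<epsilon> * real n powr \<gamma> / 4)))"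
  proof (rule sum_mono)
    fix k assume "k \<in> K"
    with \<open>K \<subseteq> {..n}\<close> have "k \<le> n"
      by auto
    show "prob (E k) \<le> 2 * exp (- (\<epsilon> * real n powr \<gamma> / 4))"
      unfolding E_def using assms(2-5) hits[OF \<open>k \<in> K\<close>] ratio
      by (rule masked_sum_large_prob_le[OF \<open>k \<le> n\<close>])
  qed
  also have "\<dots> \<le> 2 * (real n + 1) * exp (- (\<epsilon> * real n powr \<gamma> / 4))"
    using card_mono[OF finite_atMost \<open>K \<subseteq> {..n}\<close>] by simp
  finally show ?thesis .
qed

lemma Wsum_max_tail_tendsto_zero:
  fixes \<sigma> :: "nat \<Rightarrow> 'a \<Rightarrow> nat \<Rightarrow> nat" and m :: "nat \<Rightarrow> nat" and a :: "nat \<Rightarrow> real"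
    and K :: "nat \<Rightarrow> nat set"
  assumes \<sigma>_perm: "\<And>n \<omega>. \<omega> \<in> space M \<Longrightarrow> bij_betw (\<sigma> n \<omega>) {1..m n} {1..m n}"
    and "0 < \<gamma>" "0 < \<epsilon>" and K: "\<And>n. K n \<subseteq> {..n}"
    and hits: "\<And>n k. 1 \<le> n \<Longrightarrow> k \<in> K n \<Longrightarrow>
      prob {\<omega> \<in> space M. real k / real n \<in> R n 1 \<omega>} \<le> C * real n powr (-c0)"
    and ratio: "\<And>c. 0 < c \<Longrightarrow> eventually (\<lambda>n. 1 \<le> a n \<and>
      real (m n) * real n powr (-c0) * expectation (\<lambda>\<omega>. min \<bar>X 1 \<omega>\<bar> (a n)) / a n \<le> c) sequentially"
  shows "(\<lambda>n. prob {\<omega> \<in> space M. Max (insert 0 ((\<lambda>k. \<bar>Wsum X R \<sigma> m a \<gamma> n l k \<omega>\<bar>) ` K n)) / a n > \<epsilon>})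
    \<longlonglongrightarrow> 0"
proof -
  define C' where "C' = max C 1"
  have "0 < C'"
    by (simp add: C'_def)
  have hits': "prob {\<omega> \<in> space M. real k / real n \<in> R n 1 \<omega>} \<le> C' * real n powr (-c0)"
    if "1 \<le> n" "k \<in> K n" for n k
    using hits[OF that] mult_right_mono[of C C' "real n powr (-c0)"] by (simp add: C'_def)
  have "eventually (\<lambda>n. real l * real n powr (-\<gamma>) < \<epsilon> / 2) sequentially"
    using \<open>0 < \<epsilon>\<close> \<open>0 < \<gamma>\<close> by (intro order_tendstoD(2)[of _ 0]) (real_asymp, simp)
  moreover have "eventually (\<lambda>n. 1 \<le> a n \<and> real (m n) * real n powr (-c0)
      * expectation (\<lambda>\<omega>. min \<bar>X 1 \<omega>\<bar> (a n)) / a n \<le> \<epsilon> / (8 * C')) sequentially"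
    using \<open>0 < \<epsilon>\<close> \<open>0 < C'\<close> by (intro ratio) simp
  ultimately have bound: "eventually (\<lambda>n. prob {\<omega> \<in> space M. Max (insert 0 ((\<lambda>k. \<bar>Wsum X R \<sigma> m a \<gamma> n l k \<omega>\<bar>) ` K n)) / a n > \<epsilon>}
      \<le> 2 * (real n + 1) * exp (- (\<epsilon> * real n powr \<gamma> / 4))) sequentially"
    using eventually_ge_at_top[of 1]
  proof eventually_elim
    case (elim n)
    then have "1 \<le> n"
      by simp
    then show ?case
      using elim \<open>0 < \<gamma>\<close> \<open>0 < C'\<close>
      by (intro Wsum_max_tail_le[OF \<sigma>_perm _ _ _ _ \<open>0 < \<epsilon>\<close> K _ hits'[OF \<open>1 \<le> n\<close>]]) auto
  qed
  have decay: "(\<lambda>n. 2 * (real n + 1) * exp (- (\<epsilon> * real n powr \<gamma> / 4))) \<longlonglongrightarrow> 0"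
    using \<open>0 < \<epsilon>\<close> \<open>0 < \<gamma>\<close> by real_asymp
  show ?thesis
    by (rule tendsto_sandwich[OF _ bound tendsto_const decay]) simp
qed

end

theorem lemma3p9:
  fixes M :: "'a measure"
    and E :: "real set"
    and R :: "nat \<Rightarrow> nat \<Rightarrow> 'a \<Rightarrow> real set"
    and X :: "nat \<Rightarrow> 'a \<Rightarrow> real"
    and \<sigma> :: "nat \<Rightarrow> 'a \<Rightarrow> nat \<Rightarrow> nat"
    and m :: "nat \<Rightarrow> nat"
    and a :: "nat \<Rightarrow> real"
    and c0 \<alpha> p \<kappa> \<gamma> :: real
    and l :: nat and g1 g2 \<epsilon> :: real
  assumes M: "prob_space M"
    and E: "E \<subseteq> {0..1}" "finite ({0..1} - E)"
    \<comment> \<open>random sets R_{n,j}, j >= 1: a.s. contained in the grid, i.i.d. in j\<close>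
    and R_grid: "\<And>n j. j \<ge> 1 \<Longrightarrow> AE \<omega> in M. R n j \<omega> \<subseteq> {real k / real n | k. k \<le> n}"
    and R_indep: "\<And>n. prob_space.indep_vars M (\<lambda>_. count_space (Pow {..n}))
                     (\<lambda>j \<omega>. grid_trace n (R n j \<omega>)) {1..}"
    and R_ident: "\<And>n j. j \<ge> 1 \<Longrightarrow>
        distr M (count_space (Pow {..n})) (\<lambda>\<omega>. grid_trace n (R n j \<omega>))
      = distr M (count_space (Pow {..n})) (\<lambda>\<omega>. grid_trace n (R n 1 \<omega>))"
    and c0: "c0 > 0"
    and R_small: "\<And>g1 g2. {g1..g2} \<subseteq> E \<Longrightarrow> \<exists>C. \<forall>n\<ge>1. \<forall>k\<le>n. real k / real n \<in> {g1..g2} \<longrightarrow>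
        measure M {\<omega> \<in> space M. real k / real n \<in> R n 1 \<omega>} \<le> C * real n powr (- c0)"
    \<comment> \<open>X_j, j >= 1, i.i.d. and independent of all R_{n,j}\<close>
    and X_indep: "prob_space.indep_vars M (\<lambda>_. borel) X {1..}"
    and X_ident: "\<And>j. j \<ge> 1 \<Longrightarrow> distr M borel (X j) = distr M borel (X 1)"
    and XR_indep: "prob_space.indep_set M
        (sets (vimage_algebra (space M) (\<lambda>\<omega>. \<lambda>j\<in>{1..}. X j \<omega>) (PiM {1..} (\<lambda>_. borel))))
        (sets (vimage_algebra (space M)
           (\<lambda>\<omega>. \<lambda>nj\<in>UNIV \<times> {1..}. grid_trace (fst nj) (R (fst nj) (snd nj) \<omega>))
           (PiM (UNIV \<times> {1..}) (\<lambda>nj. count_space (Pow {..fst nj})))))"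
    and \<alpha>: "\<alpha> \<ge> 1"
    and tail: "\<exists>L. slowly_varying L \<and>
        (\<forall>x>0. measure M {\<omega> \<in> space M. \<bar>X 1 \<omega>\<bar> > x} = x powr (- \<alpha>) * L x)"
    and p: "0 < p" "p \<le> 1"
    and balance: "((\<lambda>x. measure M {\<omega> \<in> space M. X 1 \<omega> > x}
                      / measure M {\<omega> \<in> space M. \<bar>X 1 \<omega>\<bar> > x}) \<longlongrightarrow> p) at_top"
    and m_mono: "mono m" and m_pos: "\<And>n. m n > 0"
    and m_inf: "filterlim m at_top sequentially"
    and \<kappa>: "\<kappa> > 0" "\<alpha> > 1 \<Longrightarrow> \<kappa> < c0 / (1 - 1 / \<alpha>)"
    and m_growth: "\<exists>C. \<forall>n\<ge>1. real (m n) \<le> C * real n powr \<kappa>"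
    and a_n: "(\<lambda>n. real (m n) * measure M {\<omega> \<in> space M. X 1 \<omega> > a n}) \<longlonglongrightarrow> 1"
    \<comment> \<open>sigma_n: the permutation ordering |X_1|,...,|X_{m_n}| decreasingly\<close>
    and \<sigma>_meas: "\<And>n. \<sigma> n \<in> measurable M (count_space UNIV)"
    and \<sigma>_perm: "\<And>n \<omega>. \<omega> \<in> space M \<Longrightarrow> bij_betw (\<sigma> n \<omega>) {1..m n} {1..m n}"
    and \<sigma>_sorted: "\<And>n \<omega> i j. \<omega> \<in> space M \<Longrightarrow> 1 \<le> i \<Longrightarrow> i \<le> j \<Longrightarrow> j \<le> m n \<Longrightarrow>
        \<bar>X (\<sigma> n \<omega> j) \<omega>\<bar> \<le> \<bar>X (\<sigma> n \<omega> i) \<omega>\<bar>"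
    and \<gamma>: "0 < \<gamma>" "\<gamma> < c0 / \<alpha>"
    and G: "{g1..g2} \<subseteq> E"
    and \<epsilon>: "\<epsilon> > 0"
  shows "limsup (\<lambda>n. ereal (measure M {\<omega> \<in> space M.
            Max (insert 0 ((\<lambda>k. \<bar>Wsum X R \<sigma> m a \<gamma> n l k \<omega>\<bar>) ` {k. k \<le> n \<and> real k / real n \<in> {g1..g2}}))
              / a n > \<epsilon>})) = 0"
proof -
  interpret iid_sample_with_random_sets M X R
    by (intro iid_sample_with_random_sets.intro[OF M] iid_sample_with_random_sets_axioms.intro)
      (fact X_indep X_ident R_indep R_ident XR_indep)+
  obtain L where L: "slowly_varying L" "\<And>x. 0 < x \<Longrightarrow> prob {\<omega> \<in> space M. \<bar>X 1 \<omega>\<bar> > x} = x powr (-\<alpha>) * L x"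
    using tail by blast
  obtain C where C: "\<And>n. 1 \<le> n \<Longrightarrow> real (m n) \<le> C * real n powr \<kappa>"
    using m_growth by blast
  obtain C0 where C0: "\<forall>n\<ge>1. \<forall>k\<le>n. real k / real n \<in> {g1..g2} \<longrightarrow>
      prob {\<omega> \<in> space M. real k / real n \<in> R n 1 \<omega>} \<le> C0 * real n powr (- c0)"
    using R_small[OF G] by blast
  define K where "K n = {k. k \<le> n \<and> real k / real n \<in> {g1..g2}}" for n
  have "(\<lambda>n. prob {\<omega> \<in> space M. Max (insert 0 ((\<lambda>k. \<bar>Wsum X R \<sigma> m a \<gamma> n l k \<omega>\<bar>) ` K n)) / a n > \<epsilon>})
      \<longlonglongrightarrow> 0"
  proof (rule Wsum_max_tail_tendsto_zero[OF \<sigma>_perm \<gamma>(1) \<epsilon>])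
    show "K n \<subseteq> {..n}" for n
      by (auto simp: K_def)
    show "prob {\<omega> \<in> space M. real k / real n \<in> R n 1 \<omega>} \<le> C0 * real n powr (- c0)"
      if "1 \<le> n" "k \<in> K n" for n k
      using C0 that by (auto simp: K_def)
    show "eventually (\<lambda>n. 1 \<le> a n \<and> real (m n) * real n powr (-c0)
        * expectation (\<lambda>\<omega>. min \<bar>X 1 \<omega>\<bar> (a n)) / a n \<le> c) sequentially" if "0 < c" for c
      by (rule truncated_mean_over_norming_eventually_le[OF X_measurable[OF order.refl] L balance p(1) \<alpha> \<kappa> c0 m_pos m_inf C a_n that])
  qed
  then have "(\<lambda>n. ereal (prob {\<omega> \<in> space M. Max (insert 0 ((\<lambda>k. \<bar>Wsum X R \<sigma> m a \<gamma> n l k \<omega>\<bar>) ` K n)) / a n > \<epsilon>}))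
      \<longlonglongrightarrow> ereal 0"
    by (rule tendsto_ereal)
  from lim_imp_Limsup[OF trivial_limit_sequentially this] show ?thesis
    by (simp add: K_def)
qed

end
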